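(* Let $d\ge 2$ and let $\mathfrak{F}$ be an ordered field or a field that has more than two elements. Let $\mathcal{G}$ and $\mathcal{G}'$ be FFD coordinate geometries over $\mathfrak{F}$ (of dimension $d$). Then: (i) $\mathrm{Co}(\mathcal{G})\subseteq\mathrm{Co}(\mathcal{G}')$ if and only if $\mathrm{Aut}(\mathcal{G})\supseteq\mathrm{Aut}(\mathcal{G}')$; (ii) $\mathrm{Co}(\mathcal{G})\subseteq\mathrm{Co}(\mathcal{G}')$ if and only if $\mathrm{AffAut}(\mathcal{G})\supseteq\mathrm{AffAut}(\mathcal{G}')$.
   Context: A field is $\langle F,+,\cdot,0,1\rangle$; an ordered field is $\langle F,+,\cdot,0,1,\le\rangle$. "Definable" means first-order definable without parameters. For a model $\mathfrak{M}$, $\mathrm{Co}(\mathfrak{M})$ is the set of all relations (of all finite arities $n\ge1$) on its universe that are definable in $\mathfrak{M}$, and $\mathrm{Aut}(\mathfrak{M})$ its automorphism group. For points of $F^d$: ${\mathsf{Col}}(\vec p,\vec q,\vec r)$ iff $\vec q=\vec p+\lambda(\vec r-\vec p)$ for some $\lambda\in F$ or $\vec r=\vec p$; for an ordered field, ${\mathsf{Bw}}(\vec p,\vec q,\vec r)$ iff $\vec q=\vec p+\lambda(\vec r-\vec p)$ for some $\lambda\in F$ with $0\le\lambda\le1$. An $n$-ary relation $\mathsf{R}$ on $F^d$ is definable over $\mathfrak{F}$ iff the corresponding $dn$-ary relation on $F$ obtained by listing coordinates of the $n$ points consecutively is definable in $\mathfrak{F}$. A coordinate geometry over a field (resp. ordered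 field) $\mathfrak{F}$ is a model with universe $F^d$, only relation symbols in its language, in which ${\mathsf{Col}}$ (resp. ${\mathsf{Bw}}$) is definable. It is FFD if it has finitely many relations, each definable over $\mathfrak{F}$. An affine transformation of $F^d$ is a composition of an invertible linear map followed by a translation; $\mathrm{AffAut}(\mathcal{G})=\mathrm{Aut}(\mathcal{G})\cap\{\text{affine transformations}\}$. *)

theory Defs
  imports Main
begin

text \<open>A relational structure is given by a carrier U and a finite list of relations,
  each paired with its arity. Tuples are lists.\<close>

datatype rfm = REq nat nat | RRel nat "nat list" | RNeg rfm | RAnd rfm rfm | REx nat rfm

fun rsat :: "'b set \<Rightarrow> (nat \<times> 'b list set) list \<Rightarrow> rfm \<Rightarrow> (nat \<Rightarrow> 'b) \<Rightarrow> bool" where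
  "rsat U I (REq i j) v = (v i = v j)"
| "rsat U I (RRel k xs) v =
     (k < length I \<and> length xs = fst (I ! k) \<and> map v xs \<in> snd (I ! k))"
| "rsat U I (RNeg \<phi>) v = (\<not> rsat U I \<phi> v)"
| "rsat U I (RAnd \<phi> \<psi>) v = (rsat U I \<phi> v \<and> rsat U I \<psi> v)"
| "rsat U I (REx x \<phi>) v = (\<exists>a\<in>U. rsat U I \<phi> (v(x := a)))"

text \<open>Parameter-free definability of an n-ary relation: the formula must define R
  under every assignment into the carrier (so variables other than 0..n-1 carry no
  parameters).\<close>
definition rdefinable :: "'b set \<Rightarrow> (nat \<times> 'b list set) list \<Rightarrow> nat \<Rightarrow> 'b list set \<Rightarrow> bool" where
  "rdefinable U I n R \<longleftrightarrow>
     R \<subseteq> {xs. length xs = n \<and> set xs \<subseteq> U} \<and>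
     (\<exists>\<phi>. \<forall>v. (\<forall>i. v i \<in> U) \<longrightarrow> (map v [0..<n] \<in> R \<longleftrightarrow> rsat U I \<phi> v))"

definition Co :: "'b set \<Rightarrow> (nat \<times> 'b list set) list \<Rightarrow> (nat \<times> 'b list set) set" where
  "Co U I = {(n, R). n \<ge> 1 \<and> rdefinable U I n R}"

definition Aut :: "'b set \<Rightarrow> (nat \<times> 'b list set) list \<Rightarrow> ('b \<Rightarrow> 'b) set" where
  "Aut U I = {f. bij_betw f U U \<and> (\<forall>x. x \<notin> U \<longrightarrow> f x = x) \<and>
      (\<forall>(n, R)\<in>set I. \<forall>xs. length xs = n \<and> set xs \<subseteq> U \<longrightarrow> (map f xs \<in> R \<longleftrightarrow> xs \<in> R))}"

datatype ftm = FVar nat | FZero | FOne | FAdd ftm ftm | FMul ftm ftm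

datatype ffm = FEq ftm ftm | FLe ftm ftm | FNeg ffm | FAnd ffm ffm | FEx nat ffm

fun feval :: "ftm \<Rightarrow> (nat \<Rightarrow> 'a::field) \<Rightarrow> 'a" where
  "feval (FVar i) v = v i"
| "feval FZero v = 0"
| "feval FOne v = 1"
| "feval (FAdd s t) v = feval s v + feval t v"
| "feval (FMul s t) v = feval s v * feval t v"

fun fsat :: "('a::field \<Rightarrow> 'a \<Rightarrow> bool) \<Rightarrow> ffm \<Rightarrow> (nat \<Rightarrow> 'a) \<Rightarrow> bool" where
  "fsat le (FEq s t) v = (feval s v = feval t v)"
| "fsat le (FLe s t) v = le (feval s v) (feval t v)"
| "fsat le (FNeg \<phi>) v = (\<not> fsat le \<phi> v)"
| "fsat le (FAnd \<phi> \<psi>) v = (fsat le \<phi> v \<and> fsat le \<psi> v)"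
| "fsat le (FEx x \<phi>) v = (\<exists>a. fsat le \<phi> (v(x := a)))"

fun le_free :: "ffm \<Rightarrow> bool" where
  "le_free (FEq s t) = True"
| "le_free (FLe s t) = False"
| "le_free (FNeg \<phi>) = le_free \<phi>"
| "le_free (FAnd \<phi> \<psi>) = (le_free \<phi> \<and> le_free \<psi>)"
| "le_free (FEx x \<phi>) = le_free \<phi>"

text \<open>isord = True: the ordered field (F,+,*,0,1,le); isord = False: the field
  (F,+,*,0,1), whose language has no order symbol.\<close>
definition fdefinable :: "bool \<Rightarrow> ('a::field \<Rightarrow> 'a \<Rightarrow> bool) \<Rightarrow> nat \<Rightarrow> 'a list set \<Rightarrow> bool" where
  "fdefinable isord le n R \<longleftrightarrow>
     R \<subseteq> {xs. length xs = n} \<and>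
     (\<exists>\<phi>. (\<not> isord \<longrightarrow> le_free \<phi>) \<and> (\<forall>v. map v [0..<n] \<in> R \<longleftrightarrow> fsat le \<phi> v))"

definition ordered_field_le :: "('a::field \<Rightarrow> 'a \<Rightarrow> bool) \<Rightarrow> bool" where
  "ordered_field_le le \<longleftrightarrow>
     (\<forall>x. le x x) \<and> (\<forall>x y. le x y \<and> le y x \<longrightarrow> x = y) \<and>
     (\<forall>x y z. le x y \<and> le y z \<longrightarrow> le x z) \<and> (\<forall>x y. le x y \<or> le y x) \<and>
     (\<forall>x y z. le x y \<longrightarrow> le (x + z) (y + z)) \<and>
     (\<forall>x y. le 0 x \<and> le 0 y \<longrightarrow> le 0 (x * y))"

definition Pts :: "nat \<Rightarrow> 'a list set" where
  "Pts d = {p. length p = d}"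

definition vadd :: "'a::field list \<Rightarrow> 'a list \<Rightarrow> 'a list" where
  "vadd p q = map2 (+) p q"

definition vsub :: "'a::field list \<Rightarrow> 'a list \<Rightarrow> 'a list" where
  "vsub p q = map2 (-) p q"

definition smul :: "'a::field \<Rightarrow> 'a list \<Rightarrow> 'a list" where
  "smul c p = map ((*) c) p"

definition Col :: "nat \<Rightarrow> 'a::field list list set" where
  "Col d = {[p, q, r] | p q r. p \<in> Pts d \<and> q \<in> Pts d \<and> r \<in> Pts d \<and>
     ((\<exists>t. q = vadd p (smul t (vsub r p))) \<or> r = p)}"

definition Bw :: "('a::field \<Rightarrow> 'a \<Rightarrow> bool) \<Rightarrow> nat \<Rightarrow> 'a list list set" where
  "Bw le d = {[p, q, r] | p q r. p \<in> Pts d \<and> q \<in> Pts d \<and> r \<in> Pts d \<and>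
     (\<exists>t. le 0 t \<and> le t 1 \<and> q = vadd p (smul t (vsub r p)))}"

text \<open>An n-ary relation on F^d is definable over F iff the dn-ary relation obtained by
  listing coordinates consecutively is.\<close>
definition pdefinable :: "bool \<Rightarrow> ('a::field \<Rightarrow> 'a \<Rightarrow> bool) \<Rightarrow> nat \<Rightarrow> nat \<Rightarrow> 'a list list set \<Rightarrow> bool" where
  "pdefinable isord le d n R \<longleftrightarrow>
     R \<subseteq> {xs. length xs = n \<and> set xs \<subseteq> Pts d} \<and> fdefinable isord le (d * n) (concat ` R)"

definition wf_geom :: "nat \<Rightarrow> (nat \<times> 'a list list set) list \<Rightarrow> bool" where
  "wf_geom d G \<longleftrightarrow> (\<forall>(n, R)\<in>set G. n \<ge> 1 \<and> R \<subseteq> {xs. length xs = n \<and> set xs \<subseteq> Pts d})"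

definition coord_geom :: "bool \<Rightarrow> ('a::field \<Rightarrow> 'a \<Rightarrow> bool) \<Rightarrow> nat \<Rightarrow> (nat \<times> 'a list list set) list \<Rightarrow> bool" where
  "coord_geom isord le d G \<longleftrightarrow> wf_geom d G \<and>
     (3, if isord then Bw le d else Col d) \<in> Co (Pts d) G"

definition FFD :: "bool \<Rightarrow> ('a::field \<Rightarrow> 'a \<Rightarrow> bool) \<Rightarrow> nat \<Rightarrow> (nat \<times> 'a list list set) list \<Rightarrow> bool" where
  "FFD isord le d G \<longleftrightarrow> coord_geom isord le d G \<and>
     (\<forall>(n, R)\<in>set G. pdefinable isord le d n R)"

definition affine_transf :: "nat \<Rightarrow> ('a::field list \<Rightarrow> 'a list) \<Rightarrow> bool" where
  "affine_transf d f \<longleftrightarrow>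
     (\<exists>M :: nat \<Rightarrow> nat \<Rightarrow> 'a. \<exists>b. length b = d \<and>
        (\<exists>N :: nat \<Rightarrow> nat \<Rightarrow> 'a. \<forall>i<d. \<forall>k<d. (\<Sum>j<d. M i j * N j k) = (if i = k then 1 else 0)) \<and>
        (\<forall>p\<in>Pts d. f p = map (\<lambda>i. (\<Sum>j<d. M i j * p ! j) + b ! i) [0..<d]))"

definition AffAut :: "nat \<Rightarrow> (nat \<times> 'a::field list list set) list \<Rightarrow> ('a list \<Rightarrow> 'a list) set" where
  "AffAut d G = Aut (Pts d) G \<inter> {f. affine_transf d f}"

end

theory Submission
  imports Defs
begin

(*
  Definable relations are preserved by automorphisms, which gives Co G \<subseteq> Co G' \<Longrightarrow>
  Aut G' \<subseteq> Aut G, and Aut G' \<subseteq> Aut G \<Longrightarrow> AffAut G' \<subseteq> AffAut G is trivial.  For the remaining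
  implication AffAut G' \<subseteq> AffAut G \<Longrightarrow> Co G \<subseteq> Co G' it suffices to define every relation S of G
  in G'.  Since collinearity (or betweenness) is definable in G', so are the parallelogram and
  central-dilation constructions, and with them addition, multiplication (and the order) of the
  field on any line og e.  Hence every field formula, in particular the one defining S, can be
  interpreted in G' relative to a frame og, e1, ..., ed.  Call a frame compatible if its affine
  coordinate map carries G' onto itself; this is definable because G' has finitely many relations,
  each definable over the field.  A tuple lies in S iff it is the coordinate image of a tuple of S
  for some compatible frame: the coordinate map of a compatible frame is in AffAut G' \<subseteq> AffAut G,
  so it preserves S, and the standard frame is compatible.
*)

section \<open>Expressible properties of assignments\<close>

fun rfm_vars :: "rfm \<Rightarrow> nat set" where
  "rfm_vars (REq i j) = {i, j}"
| "rfm_vars (RRel k xs) = set xs"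
| "rfm_vars (RNeg \<phi>) = rfm_vars \<phi>"
| "rfm_vars (RAnd \<phi> \<psi>) = rfm_vars \<phi> \<union> rfm_vars \<psi>"
| "rfm_vars (REx x \<phi>) = rfm_vars \<phi> - {x}"

lemma finite_rfm_vars: "finite (rfm_vars \<phi>)"
  by (induction \<phi>) auto

lemma rsat_cong: "(\<And>z. z \<in> rfm_vars \<phi> \<Longrightarrow> v z = w z) \<Longrightarrow> rsat U I \<phi> v = rsat U I \<phi> w"
proof (induction \<phi> arbitrary: v w)
  case (RRel k xs v w)
  have "map v xs = map w xs" by (rule map_cong) (use RRel in auto)
  then show ?case by (simp only: rsat.simps)
next
  case (RNeg \<phi> v w)
  have "rsat U I \<phi> v = rsat U I \<phi> w" by (rule RNeg.IH) (use RNeg.prems in auto)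
  then show ?case by simp
next
  case (RAnd \<phi> \<psi> v w)
  have "rsat U I \<phi> v = rsat U I \<phi> w" by (rule RAnd.IH(1)) (use RAnd.prems in auto)
  moreover have "rsat U I \<psi> v = rsat U I \<psi> w" by (rule RAnd.IH(2)) (use RAnd.prems in auto)
  ultimately show ?case by simp
next
  case (REx x \<phi> v w)
  have "\<And>a. rsat U I \<phi> (v(x := a)) = rsat U I \<phi> (w(x := a))"
    by (rule REx.IH) (use REx.prems in auto)
  then show ?case by simp
qed simp

definition expressible :: "'b set \<Rightarrow> (nat \<times> 'b list set) list \<Rightarrow> ((nat \<Rightarrow> 'b) \<Rightarrow> bool) \<Rightarrow> bool" where
  "expressible U I P \<longleftrightarrow> (\<exists>\<phi>. \<forall>v. (\<forall>i. v i \<in> U) \<longrightarrow> (P v \<longleftrightarrow> rsat U I \<phi> v))"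

lemma expressible_cong:
  assumes "expressible U I P" "\<And>v. (\<And>i. v i \<in> U) \<Longrightarrow> P v = Q v"
  shows "expressible U I Q"
proof -
  from assms(1) obtain \<phi> where "\<forall>v. (\<forall>i. v i \<in> U) \<longrightarrow> (P v \<longleftrightarrow> rsat U I \<phi> v)"
    unfolding expressible_def by blast
  then show ?thesis unfolding expressible_def using assms(2) by (intro exI[of _ \<phi>]) auto
qed

lemma expressible_eq: "expressible U I (\<lambda>v. v i = v j)"
  unfolding expressible_def by (rule exI[of _ "REq i j"]) simp

lemma expressible_not: "expressible U I P \<Longrightarrow> expressible U I (\<lambda>v. \<not> P v)"
  unfolding expressible_def by (elim exE, rule_tac x = "RNeg \<phi>" in exI) simp

lemma expressible_conj: "expressible U I P \<Longrightarrow> expressible U I Q \<Longrightarrow> expressible U I (\<lambda>v. P v \<and> Q v)"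
  unfolding expressible_def by (elim exE, rule_tac x = "RAnd \<phi> \<phi>'" in exI) simp

lemma expressible_disj: "expressible U I P \<Longrightarrow> expressible U I Q \<Longrightarrow> expressible U I (\<lambda>v. P v \<or> Q v)"
proof -
  assume "expressible U I P" "expressible U I Q"
  then have "expressible U I (\<lambda>v. \<not> (\<not> P v \<and> \<not> Q v))" by (intro expressible_not expressible_conj)
  then show ?thesis by (rule expressible_cong) simp
qed

lemma expressible_imp: "expressible U I P \<Longrightarrow> expressible U I Q \<Longrightarrow> expressible U I (\<lambda>v. P v \<longrightarrow> Q v)"
proof -
  assume "expressible U I P" "expressible U I Q"
  then have "expressible U I (\<lambda>v. \<not> P v \<or> Q v)" by (intro expressible_not expressible_disj)
  then show ?thesis by (rule expressible_cong) simp
qed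

lemma expressible_iff: "expressible U I P \<Longrightarrow> expressible U I Q \<Longrightarrow> expressible U I (\<lambda>v. P v \<longleftrightarrow> Q v)"
proof -
  assume "expressible U I P" "expressible U I Q"
  then have "expressible U I (\<lambda>v. (P v \<longrightarrow> Q v) \<and> (Q v \<longrightarrow> P v))"
    by (intro expressible_imp expressible_conj)
  then show ?thesis by (rule expressible_cong) blast
qed

lemma expressible_const: "expressible U I (\<lambda>v. c)"
proof (cases c)
  case True
  show ?thesis by (rule expressible_cong[OF expressible_eq[of U I 0 0]]) (simp add: True)
next
  case False
  show ?thesis by (rule expressible_cong[OF expressible_not[OF expressible_eq[of U I 0 0]]])
    (simp add: False)
qed

lemma expressible_ex: "expressible U I P \<Longrightarrow> expressible U I (\<lambda>v. \<exists>a\<in>U. P (v(k := a)))"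
  unfolding expressible_def
proof (elim exE)
  fix \<phi> assume "\<forall>v. (\<forall>i. v i \<in> U) \<longrightarrow> P v = rsat U I \<phi> v"
  then show "\<exists>\<phi>. \<forall>v. (\<forall>i. v i \<in> U) \<longrightarrow> (\<exists>a\<in>U. P (v(k := a))) = rsat U I \<phi> v"
    by (intro exI[of _ "REx k \<phi>"]) auto
qed

lemma expressible_ex_fresh:
  assumes "expressible U I (\<lambda>v. Q (v m) v)" and "\<And>v a y. Q y (v(m := a)) = Q y v"
  shows "expressible U I (\<lambda>v. \<exists>y\<in>U. Q y v)"
proof -
  have "expressible U I (\<lambda>v. \<exists>a\<in>U. Q ((v(m := a)) m) (v(m := a)))"
    by (rule expressible_ex[OF assms(1)])
  then show ?thesis by (rule expressible_cong) (simp add: assms(2))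
qed

lemma expressible_all: "expressible U I P \<Longrightarrow> expressible U I (\<lambda>v. \<forall>a\<in>U. P (v(k := a)))"
proof -
  assume "expressible U I P"
  then have "expressible U I (\<lambda>v. \<not> (\<exists>a\<in>U. \<not> P (v(k := a))))"
    by (intro expressible_not expressible_ex)
  then show ?thesis by (rule expressible_cong) blast
qed

lemma expressible_all_less:
  "(\<And>j. j < (m::nat) \<Longrightarrow> expressible U I (P j)) \<Longrightarrow> expressible U I (\<lambda>v. \<forall>j<m. P j v)"
proof (induction m)
  case 0
  then show ?case using expressible_const[of U I True] by simp
next
  case (Suc m)
  then have "expressible U I (\<lambda>v. (\<forall>j<m. P j v) \<and> P m v)" by (intro expressible_conj) auto
  then show ?case by (rule expressible_cong) (auto simp: less_Suc_eq)
qed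

lemma expressible_ball_list:
  "(\<And>x. x \<in> set xs \<Longrightarrow> expressible U I (P x)) \<Longrightarrow> expressible U I (\<lambda>v. \<forall>x\<in>set xs. P x v)"
proof (induction xs)
  case Nil
  then show ?case using expressible_const[of U I True] by simp
next
  case (Cons a xs)
  then have "expressible U I (\<lambda>v. P a v \<and> (\<forall>x\<in>set xs. P x v))" by (intro expressible_conj) auto
  then show ?case by (rule expressible_cong) simp
qed

lemma rsat_rename_vars:
  "\<exists>\<psi>. \<forall>v. (\<forall>i. v i \<in> U) \<longrightarrow> (rsat U I \<psi> v \<longleftrightarrow> rsat U I \<phi> (v \<circ> f))"
proof (induction \<phi> arbitrary: f)
  case (REq i j)
  show ?case by (rule exI[of _ "REq (f i) (f j)"]) simp
next
  case (RRel k xs)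
  show ?case by (rule exI[of _ "RRel k (map f xs)"]) (simp add: comp_def)
next
  case (RNeg \<phi>)
  then obtain \<psi> where "\<forall>v. (\<forall>i. v i \<in> U) \<longrightarrow> (rsat U I \<psi> v \<longleftrightarrow> rsat U I \<phi> (v \<circ> f))" by blast
  then show ?case by (intro exI[of _ "RNeg \<psi>"]) (simp add: comp_def)
next
  case (RAnd \<phi>1 \<phi>2)
  obtain \<psi>1 where 1: "\<forall>v. (\<forall>i. v i \<in> U) \<longrightarrow> (rsat U I \<psi>1 v \<longleftrightarrow> rsat U I \<phi>1 (v \<circ> f))"
    using RAnd.IH(1) by blast
  obtain \<psi>2 where 2: "\<forall>v. (\<forall>i. v i \<in> U) \<longrightarrow> (rsat U I \<psi>2 v \<longleftrightarrow> rsat U I \<phi>2 (v \<circ> f))"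
    using RAnd.IH(2) by blast
  show ?case by (rule exI[of _ "RAnd \<psi>1 \<psi>2"]) (simp add: 1 2 comp_def)
next
  case (REx x \<phi>)
  define y where "y = Suc (Max (insert 0 (f ` rfm_vars \<phi>)))"
  have yf: "f z \<noteq> y" if "z \<in> rfm_vars \<phi>" for z
  proof -
    have "f z \<le> Max (insert 0 (f ` rfm_vars \<phi>))" using finite_rfm_vars that by (intro Max_ge) auto
    then show ?thesis unfolding y_def by simp
  qed
  obtain \<psi> where h: "\<forall>v. (\<forall>i. v i \<in> U) \<longrightarrow> (rsat U I \<psi> v \<longleftrightarrow> rsat U I \<phi> (v \<circ> f(x := y)))"
    using REx.IH by blast
  show ?case
  proof (rule exI[of _ "REx y \<psi>"], intro allI impI)
    fix v :: "nat \<Rightarrow> 'a" assume v: "\<forall>i. v i \<in> U"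
    have eq: "rsat U I \<phi> (v(y := a) \<circ> f(x := y)) = rsat U I \<phi> ((v \<circ> f)(x := a))" for a
      by (rule rsat_cong) (auto simp: yf)
    show "rsat U I (REx y \<psi>) v = rsat U I (REx x \<phi>) (v \<circ> f)"
      using v by (simp add: h eq)
  qed
qed

lemma expressible_rename_vars: "expressible U I P \<Longrightarrow> expressible U I (\<lambda>v. P (v \<circ> f))"
proof -
  assume "expressible U I P"
  then obtain \<phi> where h: "\<forall>v. (\<forall>i. v i \<in> U) \<longrightarrow> (P v \<longleftrightarrow> rsat U I \<phi> v)"
    unfolding expressible_def by blast
  obtain \<psi> where "\<forall>v. (\<forall>i. v i \<in> U) \<longrightarrow> (rsat U I \<psi> v \<longleftrightarrow> rsat U I \<phi> (v \<circ> f))"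
    using rsat_rename_vars by blast
  then show ?thesis unfolding expressible_def by (intro exI[of _ \<psi>]) (simp add: h)
qed

definition block_upd :: "(nat \<Rightarrow> 'b) \<Rightarrow> nat \<Rightarrow> 'b list \<Rightarrow> nat \<Rightarrow> 'b" where
  "block_upd v k cs = (\<lambda>i. if k \<le> i \<and> i < k + length cs then cs ! (i - k) else v i)"

lemma block_upd_below[simp]: "i < k \<Longrightarrow> block_upd v k cs i = v i"
  by (simp add: block_upd_def)

lemma block_upd_above: "k + length cs \<le> i \<Longrightarrow> block_upd v k cs i = v i"
  by (simp add: block_upd_def)

lemma block_upd_inside[simp]: "j < length cs \<Longrightarrow> block_upd v k cs (k + j) = cs ! j"
  by (simp add: block_upd_def)

lemma block_upd_in: "(\<And>i. v i \<in> U) \<Longrightarrow> set cs \<subseteq> U \<Longrightarrow> block_upd v k cs i \<in> U"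
  by (auto simp: block_upd_def)

lemma block_upd_Nil[simp]: "block_upd v k [] = v"
  by (auto simp: block_upd_def fun_eq_iff)

lemma block_upd_snoc: "block_upd v k (cs @ [c]) = (block_upd v k cs)(k + length cs := c)"
  by (auto simp: block_upd_def fun_eq_iff nth_append)

lemma expressible_ex_block:
  assumes "expressible U I P"
  shows "expressible U I (\<lambda>v. \<exists>cs. length cs = N \<and> set cs \<subseteq> U \<and> P (block_upd v k cs))"
  using assms
proof (induction N arbitrary: P)
  case 0
  then show ?case by (rule expressible_cong) simp
next
  case (Suc N)
  have "expressible U I (\<lambda>v. \<exists>cs. length cs = N \<and> set cs \<subseteq> U \<and>
      (\<exists>c\<in>U. P ((block_upd v k cs)(k + N := c))))"
    by (rule Suc.IH[OF expressible_ex[OF Suc.prems]])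
  then show ?case
  proof (rule expressible_cong)
    fix v :: "nat \<Rightarrow> 'a"
    have split: "(\<exists>cs. length cs = Suc N \<and> Q cs) \<longleftrightarrow> (\<exists>cs c. length cs = N \<and> Q (cs @ [c]))" for Q
      by (metis length_Suc_conv_rev length_append_singleton)
    show "(\<exists>cs. length cs = N \<and> set cs \<subseteq> U \<and> (\<exists>c\<in>U. P ((block_upd v k cs)(k + N := c)))) =
          (\<exists>cs. length cs = Suc N \<and> set cs \<subseteq> U \<and> P (block_upd v k cs))"
      unfolding split by (auto simp: block_upd_snoc)
  qed
qed

lemma expressible_all_block:
  assumes "expressible U I P"
  shows "expressible U I (\<lambda>v. \<forall>cs. length cs = N \<and> set cs \<subseteq> U \<longrightarrow> P (block_upd v k cs))"
proof -
  have "expressible U I (\<lambda>v. \<not> (\<exists>cs. length cs = N \<and> set cs \<subseteq> U \<and> \<not> P (block_upd v k cs)))"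
    by (intro expressible_not expressible_ex_block assms)
  then show ?thesis by (rule expressible_cong) blast
qed

section \<open>Definable relations and automorphisms\<close>

lemma Co_expressible: "(n, R) \<in> Co U I \<Longrightarrow> expressible U I (\<lambda>v. map v [0..<n] \<in> R)"
  unfolding Co_def rdefinable_def expressible_def by auto

lemma Co_intro:
  assumes "n \<ge> 1" "R \<subseteq> {xs. length xs = n \<and> set xs \<subseteq> U}" "expressible U I (\<lambda>v. map v [0..<n] \<in> R)"
  shows "(n, R) \<in> Co U I"
  using assms unfolding Co_def rdefinable_def expressible_def by auto

lemma Co_expressible_map:
  assumes "(n, R) \<in> Co U I" "length xs = n"
  shows "expressible U I (\<lambda>v. map v xs \<in> R)"
proof -
  have "map (v \<circ> (\<lambda>i. xs ! i)) [0..<n] = map v xs" for v :: "nat \<Rightarrow> 'a"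
    using assms(2) by (auto simp: list_eq_iff_nth_eq)
  then show ?thesis
    using expressible_rename_vars[OF Co_expressible[OF assms(1)], of "\<lambda>i. xs ! i"] by simp
qed

lemma rel_in_Co:
  assumes "(n, R) \<in> set I" "n \<ge> 1" "R \<subseteq> {xs. length xs = n \<and> set xs \<subseteq> U}"
  shows "(n, R) \<in> Co U I"
proof -
  obtain k where k: "k < length I" "I ! k = (n, R)" using assms(1) by (auto simp: in_set_conv_nth)
  have "expressible U I (\<lambda>v. map v [0..<n] \<in> R)" unfolding expressible_def
    by (rule exI[of _ "RRel k [0..<n]"]) (simp add: k)
  then show ?thesis by (rule Co_intro[OF assms(2,3)])
qed

lemma rsat_expressible_if_rels_in_Co:
  assumes "\<And>x. x \<in> set G \<Longrightarrow> x \<in> Co U G'"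
  shows "expressible U G' (rsat U G \<phi>)"
proof (induction \<phi>)
  case (RRel k xs)
  show ?case
  proof (cases "k < length G \<and> length xs = fst (G ! k)")
    case True
    then have "(fst (G ! k), snd (G ! k)) \<in> Co U G'" using assms by simp
    then have "expressible U G' (\<lambda>v. map v xs \<in> snd (G ! k))"
      by (rule Co_expressible_map) (use True in simp)
    then show ?thesis by (rule expressible_cong) (use True in simp)
  next
    case False
    have "expressible U G' (\<lambda>v. False)" by (rule expressible_const)
    then show ?thesis by (rule expressible_cong) (use False in auto)
  qed
qed (simp_all add: expressible_eq expressible_not expressible_conj expressible_ex)

lemma Co_subset_if_rels_in_Co:
  assumes "\<And>x. x \<in> set G \<Longrightarrow> x \<in> Co U G'"
  shows "Co U G \<subseteq> Co U G'"
proof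
  fix x assume x: "x \<in> Co U G"
  obtain n R where nR: "x = (n, R)" by fastforce
  have h: "n \<ge> 1" "R \<subseteq> {xs. length xs = n \<and> set xs \<subseteq> U}"
    and "expressible U G (\<lambda>v. map v [0..<n] \<in> R)"
    using x nR Co_expressible[of n R U G] unfolding Co_def rdefinable_def by auto
  then obtain \<phi> where \<phi>: "\<forall>v. (\<forall>i. v i \<in> U) \<longrightarrow> (map v [0..<n] \<in> R \<longleftrightarrow> rsat U G \<phi> v)"
    unfolding expressible_def by blast
  have "expressible U G' (\<lambda>v. map v [0..<n] \<in> R)"
    by (rule expressible_cong[OF rsat_expressible_if_rels_in_Co[OF assms]]) (use \<phi> in auto)
  then show "x \<in> Co U G'" using Co_intro[OF h] nR by simp
qed

lemma rsat_comp_Aut: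
  assumes f: "f \<in> Aut U I" and v: "\<forall>i. v i \<in> U"
  shows "rsat U I \<phi> (f \<circ> v) = rsat U I \<phi> v"
  using v
proof (induction \<phi> arbitrary: v)
  case (REq i j v)
  have "inj_on f U" using f unfolding Aut_def bij_betw_def by blast
  then show ?case using REq by (auto dest: inj_onD)
next
  case (RRel k xs v)
  show ?case
  proof (cases "k < length I \<and> length xs = fst (I ! k)")
    case True
    obtain n R where nR: "I ! k = (n, R)" by fastforce
    then have "(n, R) \<in> set I" using True by (metis nth_mem)
    moreover have "length (map v xs) = n" "set (map v xs) \<subseteq> U" using True nR RRel by auto
    ultimately have "map f (map v xs) \<in> R \<longleftrightarrow> map v xs \<in> R"
      using f unfolding Aut_def by blast
    then show ?thesis using True nR by (simp add: comp_def)
  qed auto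
next
  case (REx x \<phi> v)
  have img: "f ` U = U" using f unfolding Aut_def bij_betw_def by blast
  have "(\<exists>a\<in>U. rsat U I \<phi> ((f \<circ> v)(x := a))) = (\<exists>b\<in>U. rsat U I \<phi> (f \<circ> v(x := b)))"
    by (subst (1) img[symmetric]) (simp add: fun_upd_comp)
  also have "\<dots> = (\<exists>b\<in>U. rsat U I \<phi> (v(x := b)))"
  proof -
    have "\<And>b. b \<in> U \<Longrightarrow> rsat U I \<phi> (f \<circ> v(x := b)) = rsat U I \<phi> (v(x := b))"
      by (rule REx.IH) (use REx.prems in auto)
    then show ?thesis by auto
  qed
  finally show ?case by (simp only: rsat.simps)
qed simp_all

lemma Aut_subset_if_Co_subset:
  assumes sub: "Co U G \<subseteq> Co U G'"
    and wf: "\<forall>(n, R)\<in>set G. n \<ge> 1 \<and> R \<subseteq> {xs. length xs = n \<and> set xs \<subseteq> U}"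
    and ne: "u \<in> U"
  shows "Aut U G' \<subseteq> Aut U G"
proof
  fix f assume f: "f \<in> Aut U G'"
  have rel: "map f xs \<in> R \<longleftrightarrow> xs \<in> R"
    if nR: "(n, R) \<in> set G" and lx: "length xs = n" and sx: "set xs \<subseteq> U" for n R xs
  proof -
    have "n \<ge> 1 \<and> R \<subseteq> {xs. length xs = n \<and> set xs \<subseteq> U}" using wf nR by fast
    then have "(n, R) \<in> Co U G" using rel_in_Co[OF nR] by blast
    then have "(n, R) \<in> Co U G'" using sub by blast
    then obtain \<phi> where \<phi>: "\<forall>v. (\<forall>i. v i \<in> U) \<longrightarrow> (map v [0..<n] \<in> R \<longleftrightarrow> rsat U G' \<phi> v)"
      using Co_expressible unfolding expressible_def by blast
    define v where "v = (\<lambda>i. if i < n then xs ! i else u)"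
    have vU: "\<forall>i. v i \<in> U" using sx lx ne by (auto simp: v_def)
    have fvU: "\<forall>i. (f \<circ> v) i \<in> U" using vU f by (auto simp: Aut_def bij_betw_def)
    have mv: "map v [0..<n] = xs" using lx by (simp add: v_def list_eq_iff_nth_eq)
    then have mfv: "map (f \<circ> v) [0..<n] = map f xs" by (metis map_map)
    have "map f xs \<in> R \<longleftrightarrow> rsat U G' \<phi> (f \<circ> v)" using \<phi> fvU mfv by metis
    also have "\<dots> \<longleftrightarrow> rsat U G' \<phi> v" by (rule rsat_comp_Aut[OF f vU])
    also have "\<dots> \<longleftrightarrow> xs \<in> R" using \<phi> vU mv by metis
    finally show ?thesis .
  qed
  then show "f \<in> Aut U G" using f unfolding Aut_def by blast
qed

definition def_formula ::
    "bool \<Rightarrow> ('a::field \<Rightarrow> 'a \<Rightarrow> bool) \<Rightarrow> nat \<Rightarrow> nat \<Rightarrow> 'a list list set \<Rightarrow> ffm" where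
  "def_formula isord le d m T =
    (SOME \<phi>. (\<not> isord \<longrightarrow> le_free \<phi>) \<and> (\<forall>v. map v [0..<d * m] \<in> concat ` T \<longleftrightarrow> fsat le \<phi> v))"

lemma def_formula_spec:
  assumes "pdefinable isord le d m T"
  shows "(\<not> isord \<longrightarrow> le_free (def_formula isord le d m T)) \<and>
    (\<forall>v. map v [0..<d * m] \<in> concat ` T \<longleftrightarrow> fsat le (def_formula isord le d m T) v)"
proof -
  have "\<exists>\<phi>. (\<not> isord \<longrightarrow> le_free \<phi>) \<and> (\<forall>v. map v [0..<d * m] \<in> concat ` T \<longleftrightarrow> fsat le \<phi> v)"
    using assms unfolding pdefinable_def fdefinable_def by blast
  then show ?thesis unfolding def_formula_def by (rule someI_ex)
qed

lemma wf_geomD: "wf_geom d J \<Longrightarrow> (m, T) \<in> set J \<Longrightarrow> 1 \<le> m \<and> T \<subseteq> {xs. length xs = m \<and> set xs \<subseteq> Pts d}"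
  unfolding wf_geom_def by (drule (1) bspec) simp

section \<open>Affine geometry of coordinate lists\<close>

lemma length_vadd[simp]: "length (vadd p q) = min (length p) (length q)"
  by (simp add: vadd_def)
lemma length_vsub[simp]: "length (vsub p q) = min (length p) (length q)"
  by (simp add: vsub_def)
lemma length_smul[simp]: "length (smul c p) = length p"
  by (simp add: smul_def)
lemma nth_vadd[simp]: "i < length p \<Longrightarrow> i < length q \<Longrightarrow> vadd p q ! i = p ! i + q ! i"
  by (simp add: vadd_def)
lemma nth_vsub[simp]: "i < length p \<Longrightarrow> i < length q \<Longrightarrow> vsub p q ! i = p ! i - q ! i"
  by (simp add: vsub_def)
lemma nth_smul[simp]: "i < length p \<Longrightarrow> smul c p ! i = c * p ! i"
  by (simp add: smul_def)

lemma Pts_iff[simp]: "p \<in> Pts d \<longleftrightarrow> length p = d"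
  by (simp add: Pts_def)

lemma list_eq_iff_nth_eq_len: "length p = d \<Longrightarrow> length q = d \<Longrightarrow> p = q \<longleftrightarrow> (\<forall>i<d. p ! i = q ! i)"
  by (simp add: list_eq_iff_nth_eq)

lemma list_neq_iff_nth_neq_len: "length p = d \<Longrightarrow> length q = d \<Longrightarrow> p \<noteq> q \<longleftrightarrow> (\<exists>i<d. p ! i \<noteq> q ! i)"
  by (simp add: list_eq_iff_nth_eq)

definition col :: "'a::field list \<Rightarrow> 'a list \<Rightarrow> 'a list \<Rightarrow> bool" where
  "col p q r \<longleftrightarrow> (\<exists>t. q = vadd p (smul t (vsub r p))) \<or> r = p"

lemma eq_affine_comb_iff:
  assumes "length p = d" "length q = d" "length r = d"
  shows "q = vadd p (smul t (vsub r p)) \<longleftrightarrow> (\<forall>i<d. q ! i = p ! i + t * (r ! i - p ! i))"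
  using assms by (simp add: list_eq_iff_nth_eq)

lemma col_iff:
  assumes "length p = d" "length q = d" "length r = d"
  shows "col p q r \<longleftrightarrow> (\<exists>t. \<forall>i<d. q ! i = p ! i + t * (r ! i - p ! i)) \<or> (\<forall>i<d. r ! i = p ! i)"
  unfolding col_def using eq_affine_comb_iff[OF assms] list_eq_iff_nth_eq_len[OF assms(3,1)] by simp

lemma col_iff_param:
  assumes "length p = d" "length q = d" "length r = d" "r \<noteq> p"
  shows "col p q r \<longleftrightarrow> (\<exists>t. \<forall>i<d. q ! i = p ! i + t * (r ! i - p ! i))"
  unfolding col_def using eq_affine_comb_iff[OF assms(1-3)] assms(4) by simp

lemma col_intro:
  "length p = d \<Longrightarrow> length q = d \<Longrightarrow> length r = d \<Longrightarrow>
    \<forall>i<d. q ! i = p ! i + t * (r ! i - p ! i) \<Longrightarrow> col p q r"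
  unfolding col_def by (rule disjI1, rule exI[of _ t]) (simp add: list_eq_iff_nth_eq)

lemma Col_iff: "[p, q, r] \<in> Col d \<longleftrightarrow> length p = d \<and> length q = d \<and> length r = d \<and> col p q r"
  unfolding Col_def col_def by auto

definition noncol :: "'a::field list \<Rightarrow> 'a list \<Rightarrow> 'a list \<Rightarrow> bool" where
  "noncol a b c \<longleftrightarrow> a \<noteq> b \<and> \<not> col a c b"

lemma noncol_lin_indep:
  assumes l: "length a = d" "length b = d" "length c = d" and n: "noncol a b c"
    and e: "\<forall>i<d. x * (b ! i - a ! i) + y * (c ! i - a ! i) = 0"
  shows "x = 0 \<and> y = 0"
proof -
  have ab: "a \<noteq> b" and ncol: "\<not> col a c b" using n unfolding noncol_def by auto
  have y0: "y = 0"
  proof (rule ccontr)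
    assume y: "y \<noteq> 0"
    have "c ! i = a ! i + (- x / y) * (b ! i - a ! i)" if i: "i < d" for i
    proof -
      have "x * (b ! i - a ! i) + y * (c ! i - a ! i) = 0" using e i by blast
      then show ?thesis using y by (simp add: field_simps)
    qed
    then have "col a c b" using col_iff[OF l(1,3,2)] by blast
    then show False using ncol by simp
  qed
  obtain i where i: "i < d" "b ! i \<noteq> a ! i" using list_neq_iff_nth_neq_len[OF l(2,1)] ab by auto
  have "x * (b ! i - a ! i) = 0" using e i y0 by auto
  then have "x = 0" using i by simp
  then show ?thesis using y0 by simp
qed

definition vec :: "nat \<Rightarrow> (nat \<Rightarrow> 'a) \<Rightarrow> 'a list" where
  "vec d f = map f [0..<d]"

lemma length_vec[simp]: "length (vec d f) = d"
  by (simp add: vec_def)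
lemma nth_vec[simp]: "i < d \<Longrightarrow> vec d f ! i = f i"
  by (simp add: vec_def)

lemma col_left_eq: "length a = d \<Longrightarrow> length b = d \<Longrightarrow> col a a b"
  unfolding col_def by (rule disjI1, rule exI[of _ 0]) (simp add: list_eq_iff_nth_eq)

lemma col_right_eq: "length a = d \<Longrightarrow> length b = d \<Longrightarrow> col a b b"
  unfolding col_def by (rule disjI1, rule exI[of _ 1]) (simp add: list_eq_iff_nth_eq)

lemma noncol_neq_base1: "length a = d \<Longrightarrow> length b = d \<Longrightarrow> noncol a b c \<Longrightarrow> c \<noteq> a"
  using col_left_eq[of a d b] unfolding noncol_def by auto

lemma noncol_neq_base2: "length a = d \<Longrightarrow> length b = d \<Longrightarrow> noncol a b c \<Longrightarrow> c \<noteq> b"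
  using col_right_eq[of a d b] unfolding noncol_def by auto

lemma noncol_swap:
  assumes l: "length a = d" "length b = d" "length c = d" and n: "noncol a b c"
  shows "noncol a c b"
proof -
  have ac: "a \<noteq> c" using noncol_neq_base1[OF l(1,2) n] by simp
  have "\<not> col a b c"
  proof
    assume "col a b c"
    then obtain t where "\<forall>i<d. b ! i = a ! i + t * (c ! i - a ! i)"
      using col_iff_param[OF l(1,2,3)] ac by auto
    then have "\<forall>i<d. 1 * (b ! i - a ! i) + (- t) * (c ! i - a ! i) = 0" by simp
    from noncol_lin_indep[OF l n this] show False by simp
  qed
  then show ?thesis unfolding noncol_def using ac by simp
qed

definition coplanar :: "nat \<Rightarrow> 'a::field list \<Rightarrow> 'a list \<Rightarrow> 'a list \<Rightarrow> 'a list \<Rightarrow> bool" where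
  "coplanar d a b c x \<longleftrightarrow> (\<exists>y\<in>Pts d. \<exists>z\<in>Pts d. col a y b \<and> col a z c \<and> y \<noteq> z \<and> col y x z)"

lemma coplanar_imp_affine_comb:
  assumes l: "length a = d" "length b = d" "length c = d" "length x = d" and n: "noncol a b c"
    and "coplanar d a b c x"
  shows "\<exists>la mu. \<forall>i<d. x ! i = a ! i + la * (b ! i - a ! i) + mu * (c ! i - a ! i)"
proof -
  have ab: "b \<noteq> a" and ac: "c \<noteq> a" using n noncol_neq_base1[OF l(1,2) n] unfolding noncol_def
    by auto
  obtain y z where y: "length y = d" and z: "length z = d" and "col a y b" "col a z c"
    and yz: "y \<noteq> z" and "col y x z" using assms(6) unfolding coplanar_def by auto
  then obtain t1 t2 t where t1: "\<forall>i<d. y ! i = a ! i + t1 * (b ! i - a ! i)"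
    and t2: "\<forall>i<d. z ! i = a ! i + t2 * (c ! i - a ! i)"
    and t: "\<forall>i<d. x ! i = y ! i + t * (z ! i - y ! i)"
    using col_iff_param[OF l(1) y l(2) ab] col_iff_param[OF l(1) z l(3) ac] col_iff_param[OF y l(4)
      z]
    by metis
  have "\<forall>i<d. x ! i = a ! i + ((1 - t) * t1) * (b ! i - a ! i) + (t * t2) * (c ! i - a ! i)"
    using t t1 t2 by (simp add: algebra_simps)
  then show ?thesis by blast
qed

lemma affine_comb_imp_coplanar:
  fixes a b c x :: "'a::field list"
  assumes l: "length a = d" "length b = d" "length c = d" "length x = d" and n: "noncol a b c"
    and three: "\<exists>r1 r2 r3 :: 'a. r1 \<noteq> r2 \<and> r1 \<noteq> r3 \<and> r2 \<noteq> r3"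
    and x: "\<forall>i<d. x ! i = a ! i + la * (b ! i - a ! i) + mu * (c ! i - a ! i)"
  shows "coplanar d a b c x"
proof -
  \<comment> \<open>s must avoid both 0 and la: this is where a third field element is needed\<close>
  obtain s where s0: "s \<noteq> 0" and sl: "s - la \<noteq> 0" using three by (metis eq_iff_diff_eq_0)
  define y where "y = vec d (\<lambda>i. a ! i + s * (b ! i - a ! i))"
  define z where "z = vec d (\<lambda>i. a ! i + (s * mu / (s - la)) * (c ! i - a ! i))"
  have ly: "length y = d" and lz: "length z = d" by (simp_all add: y_def z_def)
  have cy: "col a y b" by (rule col_intro[OF l(1) ly l(2), of s]) (simp add: y_def)
  have cz: "col a z c" by (rule col_intro[OF l(1) lz l(3), of "s * mu / (s - la)"])
    (simp add: z_def)
  have yz: "y \<noteq> z"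
  proof
    assume "y = z"
    then have "\<forall>i<d. s * (b ! i - a ! i) + (- (s * mu / (s - la))) * (c ! i - a ! i) = 0"
      by (auto simp: y_def z_def list_eq_iff_nth_eq)
    then show False using noncol_lin_indep[OF l(1-3) n] s0 by blast
  qed
  have "col y x z"
  proof (rule col_intro[OF ly l(4) lz, of "(s - la) / s"], intro allI impI)
    fix i assume i: "i < d"
    have "y ! i + ((s - la) / s) * (z ! i - y ! i) = a ! i + la * (b ! i - a ! i) + mu *
      (c ! i - a ! i)"
      using i s0 sl by (simp add: y_def z_def field_simps)
    then show "x ! i = y ! i + ((s - la) / s) * (z ! i - y ! i)" using x i by simp
  qed
  moreover have "y \<in> Pts d" "z \<in> Pts d" using ly lz by simp_all
  ultimately show ?thesis unfolding coplanar_def using cy cz yz by blast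
qed

definition lines_meet :: "nat \<Rightarrow> 'a::field list \<Rightarrow> 'a list \<Rightarrow> 'a list \<Rightarrow> 'a list \<Rightarrow> bool" where
  "lines_meet d p q r s \<longleftrightarrow> (\<exists>m\<in>Pts d. col p m q \<and> col r m s)"

lemma lines_meet_if_coeff_ne_one:
  assumes l: "length a = d" "length b = d" "length c = d" "length x = d"
    and x: "\<forall>i<d. x ! i = a ! i + la * (b ! i - a ! i) + mu * (c ! i - a ! i)" and mu: "mu \<noteq> 1"
  shows "lines_meet d c x a b"
proof -
  define m where "m = vec d (\<lambda>i. a ! i + (la / (1 - mu)) * (b ! i - a ! i))"
  have lm: "length m = d" by (simp add: m_def)
  have "col a m b" by (rule col_intro[OF l(1) lm l(2), of "la / (1 - mu)"]) (simp add: m_def)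
  moreover have "col c m x"
  proof (rule col_intro[OF l(3) lm l(4), of "1 / (1 - mu)"], intro allI impI)
    fix i assume i: "i < d"
    have "c ! i + (1 / (1 - mu)) * ((a ! i + la * (b ! i - a ! i) + mu * (c ! i - a ! i)) - c ! i)
        = a ! i + (la / (1 - mu)) * (b ! i - a ! i)"
      using mu by (simp add: field_simps)
    then show "m ! i = c ! i + (1 / (1 - mu)) * (x ! i - c ! i)" using x i by (simp add: m_def)
  qed
  ultimately show ?thesis unfolding lines_meet_def using lm by auto
qed

lemma not_lines_meet_translate:
  assumes l: "length a = d" "length b = d" "length c = d" "length x = d" and n: "noncol a b c"
    and x: "\<forall>i<d. x ! i = b ! i + c ! i - a ! i"
  shows "\<not> lines_meet d c x a b"
proof
  have ab: "a \<noteq> b" using n unfolding noncol_def by auto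
  have cx: "c \<noteq> x"
  proof
    assume "c = x"
    then have "\<forall>i<d. a ! i = b ! i" using x by auto
    then show False using ab list_eq_iff_nth_eq_len[OF l(1,2)] by simp
  qed
  assume "lines_meet d c x a b"
  then obtain m where lm: "length m = d" and c1: "col c m x" and c2: "col a m b"
    unfolding lines_meet_def by auto
  obtain t where t: "\<forall>i<d. m ! i = c ! i + t * (x ! i - c ! i)"
    using c1 col_iff_param[OF l(3) lm l(4)] cx by (metis (no_types))
  obtain s where s: "\<forall>i<d. m ! i = a ! i + s * (b ! i - a ! i)"
    using c2 col_iff_param[OF l(1) lm l(2)] ab by (metis (no_types))
  have "\<forall>i<d. (t - s) * (b ! i - a ! i) + 1 * (c ! i - a ! i) = 0"
  proof (intro allI impI)
    fix i assume i: "i < d"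
    show "(t - s) * (b ! i - a ! i) + 1 * (c ! i - a ! i) = 0"
      using t[rule_format, OF i] s[rule_format, OF i] x[rule_format, OF i] by algebra
  qed
  from noncol_lin_indep[OF l(1-3) n this] show False by simp
qed

text \<open>For non-collinear a, b, c the fourth vertex x = b + c - a of the parallelogram is
  characterised by incidence alone: x lies in the plane abc and the line cx misses ab while
  bx misses ac.\<close>

definition parallelogram_noncol :: "nat \<Rightarrow> 'a::field list \<Rightarrow> 'a list \<Rightarrow> 'a list \<Rightarrow> 'a list \<Rightarrow> bool" where
  "parallelogram_noncol d a b c x \<longleftrightarrow>
     coplanar d a b c x \<and> c \<noteq> x \<and> b \<noteq> x \<and> \<not> lines_meet d c x a b \<and> \<not> lines_meet d b x a c"

lemma parallelogram_noncol_iff: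
  fixes a b c x :: "'a::field list"
  assumes l: "length a = d" "length b = d" "length c = d" "length x = d" and n: "noncol a b c"
    and three: "\<exists>r1 r2 r3 :: 'a. r1 \<noteq> r2 \<and> r1 \<noteq> r3 \<and> r2 \<noteq> r3"
  shows "parallelogram_noncol d a b c x \<longleftrightarrow> (\<forall>i<d. x ! i = b ! i + c ! i - a ! i)"
proof
  assume p: "parallelogram_noncol d a b c x"
  then obtain la mu where x: "\<forall>i<d. x ! i = a ! i + la * (b ! i - a ! i) + mu * (c ! i - a ! i)"
    using coplanar_imp_affine_comb[OF l n] unfolding parallelogram_noncol_def by blast
  have x': "\<forall>i<d. x ! i = a ! i + mu * (c ! i - a ! i) + la * (b ! i - a ! i)"
    using x by (simp add: algebra_simps)
  have "mu = 1" using lines_meet_if_coeff_ne_one[OF l x] p unfolding parallelogram_noncol_def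
    by blast
  moreover have "la = 1"
    using lines_meet_if_coeff_ne_one[OF l(1,3,2,4) x'] p unfolding parallelogram_noncol_def by blast
  ultimately show "\<forall>i<d. x ! i = b ! i + c ! i - a ! i" using x by (simp add: algebra_simps)
next
  assume x: "\<forall>i<d. x ! i = b ! i + c ! i - a ! i"
  have ab: "a \<noteq> b" and ac: "a \<noteq> c" using n noncol_neq_base1[OF l(1,2) n] unfolding noncol_def
    by auto
  have "coplanar d a b c x" by (rule affine_comb_imp_coplanar[OF l n three, of 1 1]) (simp add: x)
  moreover have "c \<noteq> x"
  proof
    assume "c = x"
    then have "\<forall>i<d. a ! i = b ! i" using x by auto
    then show False using ab list_eq_iff_nth_eq_len[OF l(1,2)] by simp
  qed
  moreover have "b \<noteq> x"
  proof
    assume "b = x"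
    then have "\<forall>i<d. a ! i = c ! i" using x by auto
    then show False using ac list_eq_iff_nth_eq_len[OF l(1,3)] by simp
  qed
  moreover have "\<not> lines_meet d c x a b" by (rule not_lines_meet_translate[OF l n x])
  moreover have "\<not> lines_meet d b x a c"
    by (rule not_lines_meet_translate[OF l(1,3,2,4) noncol_swap[OF l(1-3) n]]) (simp add: x)
  ultimately show "parallelogram_noncol d a b c x" unfolding parallelogram_noncol_def by blast
qed

lemma exists_off_line:
  fixes a b :: "'a::field list"
  assumes l: "length a = d" "length b = d" and ab: "a \<noteq> b" and d2: "2 \<le> d"
  shows "\<exists>e. length e = d \<and> \<not> col a e b"
proof (rule ccontr)
  assume h: "\<not> ?thesis"
  define e0 where "e0 = vec d (\<lambda>i. a ! i + (if i = 0 then 1 else 0))"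
  define e1 where "e1 = vec d (\<lambda>i. a ! i + (if i = 1 then 1 else 0))"
  obtain t0 t1 where t0: "\<forall>i<d. e0 ! i = a ! i + t0 * (b ! i - a ! i)"
    and t1: "\<forall>i<d. e1 ! i = a ! i + t1 * (b ! i - a ! i)"
    using h col_iff_param[OF l(1) _ l(2)] ab by (metis e0_def e1_def length_vec)
  have "1 = t0 * (b ! 0 - a ! 0)" using t0[rule_format, of 0] d2 by (simp add: e0_def)
  moreover have "0 = t1 * (b ! 0 - a ! 0)" using t1[rule_format, of 0] d2 by (simp add: e1_def)
  ultimately have "t1 = 0" by auto
  then show False using t1[rule_format, of 1] d2 by (simp add: e1_def)
qed

lemma noncol_parallel_shift:
  assumes l: "length a = d" "length b = d" "length c = d" "length e = d"
    and n: "noncol a b e" and cb: "col a c b"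
  shows "noncol e (vec d (\<lambda>i. b ! i + e ! i - a ! i)) c"
proof -
  let ?f = "vec d (\<lambda>i. b ! i + e ! i - a ! i)"
  have ab: "a \<noteq> b" using n unfolding noncol_def by simp
  have ef: "e \<noteq> ?f"
  proof
    assume "e = ?f"
    then have "\<forall>i<d. b ! i = a ! i" by (auto simp: list_eq_iff_nth_eq)
    then show False using ab list_eq_iff_nth_eq_len[OF l(1,2)] by simp
  qed
  have "\<not> col e c ?f"
  proof
    assume "col e c ?f"
    then obtain t where t: "\<forall>i<d. c ! i = e ! i + t * (?f ! i - e ! i)"
      using col_iff_param[OF l(4,3)] ef by auto
    obtain s where s: "\<forall>i<d. c ! i = a ! i + s * (b ! i - a ! i)"
      using cb col_iff_param[OF l(1,3,2)] ab by auto
    have "\<forall>i<d. e ! i = a ! i + (s - t) * (b ! i - a ! i)"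
      using t s by (simp add: algebra_simps)
    then have "col a e b" by (rule col_intro[OF l(1,4,2)])
    then show False using n unfolding noncol_def by simp
  qed
  then show ?thesis unfolding noncol_def using ef by simp
qed

text \<open>When a, b, c are collinear the parallelogram is completed through an auxiliary one
  a b e f with e off the line; this needs d \<ge> 2.\<close>

definition parallelogram :: "nat \<Rightarrow> 'a::field list \<Rightarrow> 'a list \<Rightarrow> 'a list \<Rightarrow> 'a list \<Rightarrow> bool" where
  "parallelogram d a b c x \<longleftrightarrow> (a = b \<and> x = c) \<or> (noncol a b c \<and> parallelogram_noncol d a b c x) \<or>
     (a \<noteq> b \<and> col a c b \<and> (\<exists>e\<in>Pts d. \<exists>f\<in>Pts d. noncol a b e \<and> parallelogram_noncol d a b e f \<and>
        noncol e f c \<and> parallelogram_noncol d e f c x))"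

lemma parallelogram_iff:
  fixes a b c x :: "'a::field list"
  assumes l: "length a = d" "length b = d" "length c = d" "length x = d" and d2: "2 \<le> d"
    and three: "\<exists>r1 r2 r3 :: 'a. r1 \<noteq> r2 \<and> r1 \<noteq> r3 \<and> r2 \<noteq> r3"
  shows "parallelogram d a b c x \<longleftrightarrow> (\<forall>i<d. x ! i = b ! i + c ! i - a ! i)"
proof
  assume "parallelogram d a b c x"
  then consider "a = b" "x = c" | "noncol a b c" "parallelogram_noncol d a b c x" |
    e f where "length e = d" "length f = d" "noncol a b e" "parallelogram_noncol d a b e f"
      "noncol e f c" "parallelogram_noncol d e f c x"
    unfolding parallelogram_def by auto
  then show "\<forall>i<d. x ! i = b ! i + c ! i - a ! i"
  proof cases
    case 2 then show ?thesis using parallelogram_noncol_iff[OF l 2(1) three] by simp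
  next
    case (3 e f)
    have "\<forall>i<d. f ! i = b ! i + e ! i - a ! i"
      using parallelogram_noncol_iff[OF l(1,2) 3(1,2) 3(3) three] 3(4) by simp
    moreover have "\<forall>i<d. x ! i = f ! i + c ! i - e ! i"
      using parallelogram_noncol_iff[OF 3(1,2) l(3,4) 3(5) three] 3(6) by simp
    ultimately show ?thesis by simp
  qed simp
next
  assume x: "\<forall>i<d. x ! i = b ! i + c ! i - a ! i"
  consider "a = b" | "a \<noteq> b" "\<not> col a c b" | "a \<noteq> b" "col a c b" by blast
  then show "parallelogram d a b c x"
  proof cases
    case 1
    then have "x = c" using x list_eq_iff_nth_eq_len[OF l(4,3)] by simp
    then show ?thesis unfolding parallelogram_def using 1 by simp
  next
    case 2
    then have n: "noncol a b c" unfolding noncol_def by simp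
    then show ?thesis unfolding parallelogram_def using parallelogram_noncol_iff[OF l n three] x
      by simp
  next
    case 3
    obtain e where le: "length e = d" and "\<not> col a e b" using exists_off_line[OF l(1,2) 3(1) d2]
      by blast
    then have n1: "noncol a b e" unfolding noncol_def using 3 by simp
    define f where "f = vec d (\<lambda>i. b ! i + e ! i - a ! i)"
    have lf: "length f = d" by (simp add: f_def)
    have n2: "noncol e f c" unfolding f_def by (rule noncol_parallel_shift[OF l(1-3) le n1 3(2)])
    have "parallelogram_noncol d a b e f"
      using parallelogram_noncol_iff[OF l(1,2) le lf n1 three] by (simp add: f_def)
    moreover have "parallelogram_noncol d e f c x"
      using parallelogram_noncol_iff[OF le lf l(3,4) n2 three] x by (simp add: f_def)
    ultimately show ?thesis unfolding parallelogram_def using 3 le lf n1 n2 by auto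
  qed
qed

definition parallel_through :: "nat \<Rightarrow> 'a::field list \<Rightarrow> 'a list \<Rightarrow> 'a list \<Rightarrow> 'a list \<Rightarrow> bool" where
  "parallel_through d a b c x \<longleftrightarrow> (\<exists>y\<in>Pts d. parallelogram d a b c y \<and> col c x y)"

lemma parallel_through_iff:
  fixes a b c x :: "'a::field list"
  assumes l: "length a = d" "length b = d" "length c = d" "length x = d" and d2: "2 \<le> d"
    and three: "\<exists>r1 r2 r3 :: 'a. r1 \<noteq> r2 \<and> r1 \<noteq> r3 \<and> r2 \<noteq> r3" and ab: "a \<noteq> b"
  shows "parallel_through d a b c x \<longleftrightarrow> (\<exists>t. \<forall>i<d. x ! i = c ! i + t * (b ! i - a ! i))"
proof -
  define y where "y = vec d (\<lambda>i. b ! i + c ! i - a ! i)"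
  have ly: "length y = d" by (simp add: y_def)
  have yc: "y \<noteq> c"
  proof
    assume "y = c"
    then have "\<forall>i<d. a ! i = b ! i" by (auto simp: y_def list_eq_iff_nth_eq)
    then show False using ab list_eq_iff_nth_eq_len[OF l(1,2)] by simp
  qed
  have P: "parallelogram d a b c z \<longleftrightarrow> z = y" if lz: "length z = d" for z
  proof -
    have "parallelogram d a b c z \<longleftrightarrow> (\<forall>i<d. z ! i = b ! i + c ! i - a ! i)"
      by (rule parallelogram_iff[OF l(1-3) lz d2 three])
    also have "\<dots> \<longleftrightarrow> z = y" using lz by (simp add: y_def list_eq_iff_nth_eq)
    finally show ?thesis .
  qed
  have "parallel_through d a b c x \<longleftrightarrow> col c x y"
    unfolding parallel_through_def using P ly by (metis Pts_iff)
  also have "\<dots> \<longleftrightarrow> (\<exists>t. \<forall>i<d. x ! i = c ! i + t * (b ! i - a ! i))"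
    using col_iff_param[OF l(3,4) ly yc] by (simp add: y_def)
  finally show ?thesis .
qed

text \<open>Central dilation with centre og and ratio s, the ratio being given by the point
  x = og + s (e - og) on a reference line og e; for p off that line, q is found by
  drawing the parallel to e p through x.\<close>

definition scaling_noncol ::
    "nat \<Rightarrow> 'a::field list \<Rightarrow> 'a list \<Rightarrow> 'a list \<Rightarrow> 'a list \<Rightarrow> 'a list \<Rightarrow> bool" where
  "scaling_noncol d og e x p q \<longleftrightarrow> col og q p \<and> parallel_through d e p x q"

lemma scaling_noncol_iff:
  fixes og e x p q :: "'a::field list"
  assumes l: "length og = d" "length e = d" "length x = d" "length p = d" "length q = d"
    and d2: "2 \<le> d" and three: "\<exists>r1 r2 r3 :: 'a. r1 \<noteq> r2 \<and> r1 \<noteq> r3 \<and> r2 \<noteq> r3"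
    and n: "noncol og e p" and x: "\<forall>i<d. x ! i = og ! i + s * (e ! i - og ! i)"
  shows "scaling_noncol d og e x p q \<longleftrightarrow> (\<forall>i<d. q ! i = og ! i + s * (p ! i - og ! i))"
proof
  have po: "p \<noteq> og" using noncol_neq_base1[OF l(1,2) n] .
  have pe: "e \<noteq> p" using noncol_neq_base2[OF l(1,2) n] by simp
  assume "scaling_noncol d og e x p q"
  then have c: "col og q p" and pd: "parallel_through d e p x q" unfolding scaling_noncol_def
    by auto
  obtain mu where mu: "\<forall>i<d. q ! i = og ! i + mu * (p ! i - og ! i)"
    using c col_iff_param[OF l(1,5,4) po] by blast
  obtain la where la: "\<forall>i<d. q ! i = x ! i + la * (p ! i - e ! i)"
    using pd parallel_through_iff[OF l(2,4,3,5) d2 three pe] by blast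
  have "\<forall>i<d. (la - s) * (e ! i - og ! i) + (mu - la) * (p ! i - og ! i) = 0"
  proof (intro allI impI)
    fix i assume i: "i < d"
    show "(la - s) * (e ! i - og ! i) + (mu - la) * (p ! i - og ! i) = 0"
      using mu[rule_format, OF i] la[rule_format, OF i] x[rule_format, OF i] by algebra
  qed
  then have "la - s = 0 \<and> mu - la = 0" by (rule noncol_lin_indep[OF l(1,2,4) n])
  then have "mu = s" by simp
  then show "\<forall>i<d. q ! i = og ! i + s * (p ! i - og ! i)" using mu by simp
next
  have pe: "e \<noteq> p" using noncol_neq_base2[OF l(1,2) n] by simp
  assume q: "\<forall>i<d. q ! i = og ! i + s * (p ! i - og ! i)"
  have "col og q p" using q by (rule col_intro[OF l(1,5,4)])
  moreover have "\<forall>i<d. q ! i = x ! i + s * (p ! i - e ! i)"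
  proof (intro allI impI)
    fix i assume i: "i < d"
    show "q ! i = x ! i + s * (p ! i - e ! i)"
      using q[rule_format, OF i] x[rule_format, OF i] by algebra
  qed
  then have "parallel_through d e p x q" using parallel_through_iff[OF l(2,4,3,5) d2 three pe]
    by blast
  ultimately show "scaling_noncol d og e x p q" unfolding scaling_noncol_def by simp
qed

lemma noncol_translate:
  fixes og e1 e2 p :: "'a::field list"
  assumes l: "length og = d" "length e1 = d" "length e2 = d" "length p = d"
    and n: "noncol og e1 e2" and cp: "col og p e1"
  shows "noncol og e1 (vec d (\<lambda>i. p ! i + e2 ! i - og ! i))"
proof -
  have oe: "og \<noteq> e1" using n unfolding noncol_def by simp
  obtain t where t: "\<forall>i<d. p ! i = og ! i + t * (e1 ! i - og ! i)"
    using cp col_iff_param[OF l(1,4,2)] oe by auto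
  have "\<not> col og (vec d (\<lambda>i. p ! i + e2 ! i - og ! i)) e1"
  proof
    assume "col og (vec d (\<lambda>i. p ! i + e2 ! i - og ! i)) e1"
    then obtain t' where t': "\<forall>i<d. p ! i + e2 ! i - og ! i = og ! i + t' * (e1 ! i - og ! i)"
      using col_iff_param[OF l(1) _ l(2)] oe by force
    have "\<forall>i<d. e2 ! i = og ! i + (t' - t) * (e1 ! i - og ! i)"
    proof (intro allI impI)
      fix i assume i: "i < d"
      show "e2 ! i = og ! i + (t' - t) * (e1 ! i - og ! i)"
        using t[rule_format, OF i] t'[rule_format, OF i] by algebra
    qed
    then have "col og e2 e1" by (rule col_intro[OF l(1,3,2)])
    then show False using n unfolding noncol_def by simp
  qed
  then show ?thesis unfolding noncol_def using oe by simp
qed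

text \<open>For p on the reference line itself, p is first translated off it along og e2, scaled,
  and translated back.\<close>

definition scaling :: "nat \<Rightarrow> 'a::field list \<Rightarrow> 'a list \<Rightarrow> 'a list \<Rightarrow> 'a list \<Rightarrow> 'a list \<Rightarrow> 'a list \<Rightarrow>
  bool" where
  "scaling d og e1 e2 x p q \<longleftrightarrow> (noncol og e1 p \<and> scaling_noncol d og e1 x p q) \<or>
     (col og p e1 \<and> (\<exists>p2\<in>Pts d. \<exists>q2\<in>Pts d. \<exists>w\<in>Pts d. parallelogram d og p e2 p2 \<and>
        scaling_noncol d og e1 x p2 q2 \<and> scaling_noncol d og e1 x e2 w
          \<and> parallelogram d w q2 og q))"

lemma scaling_col_iff:
  fixes og e1 e2 x p q :: "'a::field list"
  assumes l: "length og = d" "length e1 = d" "length e2 = d" "length x = d" "length p = d" "length q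
    = d"
    and d2: "2 \<le> d" and three: "\<exists>r1 r2 r3 :: 'a. r1 \<noteq> r2 \<and> r1 \<noteq> r3 \<and> r2 \<noteq> r3"
    and n: "noncol og e1 e2" and x: "\<forall>i<d. x ! i = og ! i + s * (e1 ! i - og ! i)"
    and cp: "col og p e1"
  shows "(\<exists>p2\<in>Pts d. \<exists>q2\<in>Pts d. \<exists>w\<in>Pts d. parallelogram d og p e2 p2 \<and>
        scaling_noncol d og e1 x p2 q2 \<and> scaling_noncol d og e1 x e2 w \<and> parallelogram d w q2 og q)
      \<longleftrightarrow> (\<forall>i<d. q ! i = og ! i + s * (p ! i - og ! i))"
proof -
  define p2 where "p2 = vec d (\<lambda>i. p ! i + e2 ! i - og ! i)"
  define q2 where "q2 = vec d (\<lambda>i. og ! i + s * (p2 ! i - og ! i))"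
  define w where "w = vec d (\<lambda>i. og ! i + s * (e2 ! i - og ! i))"
  have lp2: "length p2 = d" and lq2: "length q2 = d" and lw: "length w = d"
    by (simp_all add: p2_def q2_def w_def)
  have n2: "noncol og e1 p2" unfolding p2_def by (rule noncol_translate[OF l(1,2,3,5) n cp])
  have P2: "parallelogram d og p e2 y \<longleftrightarrow> y = p2" if "length y = d" for y
    using parallelogram_iff[OF l(1,5,3) that d2 three] that
      by (auto simp: p2_def list_eq_iff_nth_eq)
  have Q2: "scaling_noncol d og e1 x p2 y \<longleftrightarrow> y = q2" if "length y = d" for y
    using scaling_noncol_iff[OF l(1,2,4) lp2 that d2 three n2 x] that
    by (auto simp: q2_def list_eq_iff_nth_eq)
  have W: "scaling_noncol d og e1 x e2 y \<longleftrightarrow> y = w" if "length y = d" for y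
    using scaling_noncol_iff[OF l(1,2,4,3) that d2 three n x] that
    by (auto simp: w_def list_eq_iff_nth_eq)
  have "parallelogram d w q2 og q \<longleftrightarrow> (\<forall>i<d. q ! i = q2 ! i + og ! i - w ! i)"
    by (rule parallelogram_iff[OF lw lq2 l(1,6) d2 three])
  also have "\<dots> \<longleftrightarrow> (\<forall>i<d. q ! i = og ! i + s * (p ! i - og ! i))"
    by (simp add: q2_def w_def p2_def algebra_simps)
  finally show ?thesis using P2 Q2 W lp2 lq2 lw by auto
qed

lemma scaling_iff:
  fixes og e1 e2 x p q :: "'a::field list"
  assumes l: "length og = d" "length e1 = d" "length e2 = d" "length x = d" "length p = d" "length q
    = d"
    and d2: "2 \<le> d" and three: "\<exists>r1 r2 r3 :: 'a. r1 \<noteq> r2 \<and> r1 \<noteq> r3 \<and> r2 \<noteq> r3"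
    and n: "noncol og e1 e2" and x: "\<forall>i<d. x ! i = og ! i + s * (e1 ! i - og ! i)"
  shows "scaling d og e1 e2 x p q \<longleftrightarrow> (\<forall>i<d. q ! i = og ! i + s * (p ! i - og ! i))"
proof (cases "col og p e1")
  case False
  have "og \<noteq> e1" using n unfolding noncol_def by simp
  then have np: "noncol og e1 p" unfolding noncol_def using False by simp
  show ?thesis unfolding scaling_def using False np scaling_noncol_iff[OF l(1,2,4,5,6) d2 three np
    x] by simp
next
  case True
  then have "\<not> noncol og e1 p" unfolding noncol_def by simp
  then show ?thesis unfolding scaling_def using True scaling_col_iff[OF l d2 three n x True] by simp
qed

section \<open>The field on a line\<close>

definition line_pt :: "nat \<Rightarrow> 'a::field list \<Rightarrow> 'a list \<Rightarrow> 'a \<Rightarrow> 'a list" where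
  "line_pt d og e t = vec d (\<lambda>i. og ! i + t * (e ! i - og ! i))"

lemma length_line_pt[simp]: "length (line_pt d og e t) = d"
  by (simp add: line_pt_def)

lemma nth_line_pt[simp]: "i < d \<Longrightarrow> line_pt d og e t ! i = og ! i + t * (e ! i - og ! i)"
  by (simp add: line_pt_def)

lemma line_pt_col: "length og = d \<Longrightarrow> length e = d \<Longrightarrow> col og (line_pt d og e t) e"
  by (rule col_intro[of og d _ e t]) auto

lemma col_imp_line_pt:
  assumes "length og = d" "length e = d" "length x = d" "og \<noteq> e" "col og x e"
  shows "\<exists>t. x = line_pt d og e t"
proof -
  obtain t where t: "\<forall>i<d. x ! i = og ! i + t * (e ! i - og ! i)"
    using assms col_iff_param[of og d x e] by auto
  then have "x = line_pt d og e t" using assms(3) by (simp add: list_eq_iff_nth_eq)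
  then show ?thesis by blast
qed

lemma line_pt_inj:
  assumes "length og = d" "length e = d" "og \<noteq> e" "line_pt d og e s = line_pt d og e t"
  shows "s = t"
proof -
  obtain i where i: "i < d" "og ! i \<noteq> e ! i" using list_neq_iff_nth_neq_len[OF assms(1,2)] assms(3)
    by auto
  have "line_pt d og e s ! i = line_pt d og e t ! i" using assms(4) by simp
  then have "s * (e ! i - og ! i) = t * (e ! i - og ! i)" using i by simp
  then show ?thesis using i by simp
qed

definition line_coord :: "nat \<Rightarrow> 'a::field list \<Rightarrow> 'a list \<Rightarrow> 'a list \<Rightarrow> 'a" where
  "line_coord d og e x = (SOME t. x = line_pt d og e t)"

lemma line_coord_line_pt:
  assumes "length og = d" "length e = d" "og \<noteq> e"
  shows "line_coord d og e (line_pt d og e t) = t"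
proof -
  have "line_pt d og e t = line_pt d og e (line_coord d og e (line_pt d og e t))"
    unfolding line_coord_def by (rule someI[of _ t]) simp
  then show ?thesis using line_pt_inj[OF assms] by metis
qed

lemma line_pt_line_coord:
  assumes "length og = d" "length e = d" "length x = d" "og \<noteq> e" "col og x e"
  shows "line_pt d og e (line_coord d og e x) = x"
proof -
  obtain t where "x = line_pt d og e t" using col_imp_line_pt[OF assms] by blast
  then show ?thesis using line_coord_line_pt[OF assms(1,2,4)] by simp
qed

lemma parallelogram_line_pt_iff:
  fixes og e :: "'a::field list"
  assumes l: "length og = d" "length e = d" "length z = d" and d2: "2 \<le> d"
    and three: "\<exists>r1 r2 r3 :: 'a. r1 \<noteq> r2 \<and> r1 \<noteq> r3 \<and> r2 \<noteq> r3"
  shows "parallelogram d og (line_pt d og e s) (line_pt d og e t) z \<longleftrightarrow> z = line_pt d og e (s + t)"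
proof -
  have "parallelogram d og (line_pt d og e s) (line_pt d og e t) z \<longleftrightarrow>
        (\<forall>i<d. z ! i = line_pt d og e s ! i + line_pt d og e t ! i - og ! i)"
    by (rule parallelogram_iff[OF l(1) length_line_pt length_line_pt l(3) d2 three])
  also have "\<dots> \<longleftrightarrow> (\<forall>i<d. z ! i = line_pt d og e (s + t) ! i)"
    by (simp add: algebra_simps)
  also have "\<dots> \<longleftrightarrow> z = line_pt d og e (s + t)"
    using l(3) by (simp add: list_eq_iff_nth_eq)
  finally show ?thesis .
qed

lemma scaling_line_pt_iff:
  fixes og e1 e2 :: "'a::field list"
  assumes l: "length og = d" "length e1 = d" "length e2 = d" "length z = d" and d2: "2 \<le> d"
    and three: "\<exists>r1 r2 r3 :: 'a. r1 \<noteq> r2 \<and> r1 \<noteq> r3 \<and> r2 \<noteq> r3" and n: "noncol og e1 e2"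
  shows "scaling d og e1 e2 (line_pt d og e1 s) (line_pt d og e1 t) z \<longleftrightarrow> z = line_pt d og e1 (s * t)"
proof -
  have x: "\<forall>i<d. line_pt d og e1 s ! i = og ! i + s * (e1 ! i - og ! i)" by simp
  have "scaling d og e1 e2 (line_pt d og e1 s) (line_pt d og e1 t) z \<longleftrightarrow>
        (\<forall>i<d. z ! i = og ! i + s * (line_pt d og e1 t ! i - og ! i))"
    by (rule scaling_iff[OF l(1-3) length_line_pt length_line_pt l(4) d2 three n x])
  also have "\<dots> \<longleftrightarrow> (\<forall>i<d. z ! i = line_pt d og e1 (s * t) ! i)"
    by (simp add: algebra_simps)
  also have "\<dots> \<longleftrightarrow> z = line_pt d og e1 (s * t)"
    using l(4) by (simp add: list_eq_iff_nth_eq)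
  finally show ?thesis .
qed

section \<open>Ordered fields given by a relation\<close>

context
  fixes le :: "'a::field \<Rightarrow> 'a \<Rightarrow> bool"
  assumes ofl: "ordered_field_le le"
begin

lemma ofl_antisym: "le x y \<Longrightarrow> le y x \<Longrightarrow> x = y" using ofl unfolding ordered_field_le_def by blast
lemma ofl_trans: "le x y \<Longrightarrow> le y z \<Longrightarrow> le x z" using ofl unfolding ordered_field_le_def by blast
lemma ofl_total: "le x y \<or> le y x" using ofl unfolding ordered_field_le_def by blast
lemma ofl_add_right: "le x y \<Longrightarrow> le (x + z) (y + z)" using ofl unfolding ordered_field_le_def by blast
lemma ofl_mult_nonneg: "le 0 x \<Longrightarrow> le 0 y \<Longrightarrow> le 0 (x * y)" using ofl unfolding ordered_field_le_def
  by blast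

lemma ofl_le_iff_diff: "le x y \<longleftrightarrow> le 0 (y - x)"
proof
  assume "le x y"
  then have "le (x + - x) (y + - x)" by (rule ofl_add_right)
  then show "le 0 (y - x)" by simp
next
  assume "le 0 (y - x)"
  then have "le (0 + x) (y - x + x)" by (rule ofl_add_right)
  then show "le x y" by simp
qed

lemma ofl_zero_le_one: "le 0 1"
proof (cases "le 0 (1::'a)")
  case False
  then have "le 1 0" using ofl_total by blast
  then have "le 0 (0 - 1)" using ofl_le_iff_diff by blast
  then have "le 0 ((0 - 1) * (0 - 1))" using ofl_mult_nonneg by blast
  then show ?thesis by simp
qed

lemma ofl_not_zero_le_minus_one: "\<not> le 0 (-1)"
proof
  assume "le 0 (-1)"
  then have "le 1 0" using ofl_le_iff_diff[of 1 0] by simp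
  then show False using ofl_zero_le_one ofl_antisym by fastforce
qed

lemma ofl_inverse_bounds:
  assumes "le 1 r"
  shows "le 0 (1 / r) \<and> le (1 / r) 1"
proof -
  have r0: "r \<noteq> 0"
  proof
    assume "r = 0"
    then show False using assms ofl_zero_le_one ofl_antisym by fastforce
  qed
  have p: "le 0 (1 / r)"
  proof (rule ccontr)
    assume "\<not> le 0 (1 / r)"
    then have "le (1 / r) 0" using ofl_total by blast
    then have "le 0 (0 - 1 / r)" using ofl_le_iff_diff by blast
    moreover have "le 0 r" using ofl_trans[OF ofl_zero_le_one assms] .
    ultimately have "le 0 (r * (0 - 1 / r))" using ofl_mult_nonneg by blast
    then have "le 0 (-1)" using r0 by (simp add: field_simps)
    then show False using ofl_not_zero_le_minus_one by simp
  qed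
  have "le 0 (r - 1)" using assms ofl_le_iff_diff by blast
  then have "le 0 ((r - 1) * (1 / r))" using ofl_mult_nonneg p by blast
  then have "le 0 (1 - 1 / r)" using r0 by (simp add: field_simps)
  then have "le (1 / r) 1" using ofl_le_iff_diff by blast
  then show ?thesis using p by simp
qed

lemma ofl_nonpos_bounds:
  assumes "le la 0"
  shows "1 - la \<noteq> 0 \<and> le 0 (1 - 1 / (1 - la)) \<and> le (1 - 1 / (1 - la)) 1"
proof -
  have "le 0 (- la)" using assms ofl_le_iff_diff[of la 0] by simp
  then have m1: "le 1 (1 - la)" using ofl_add_right[of 0 "- la" 1] by simp
  then have "1 - la \<noteq> 0" using ofl_zero_le_one ofl_antisym by fastforce
  moreover have bnd: "le 0 (1 / (1 - la)) \<and> le (1 / (1 - la)) 1" by (rule ofl_inverse_bounds[OF m1])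
  then have "le 0 (1 - 1 / (1 - la))" using ofl_le_iff_diff[of "1 / (1 - la)" 1] by simp
  moreover have "le (1 - 1 / (1 - la)) 1" using bnd ofl_le_iff_diff[of "1 - 1 / (1 - la)" 1] by simp
  ultimately show ?thesis by simp
qed

lemma ofl_one_le_inverse:
  assumes "le 0 l" "le l 1" "l * r = 1"
  shows "le 1 r"
proof -
  have l0: "l \<noteq> 0" using assms(3) by auto
  have r: "le 0 r"
  proof (rule ccontr)
    assume "\<not> le 0 r"
    then have "le r 0" using ofl_total by blast
    then have "le 0 (0 - r)" using ofl_le_iff_diff by blast
    then have "le 0 (l * (0 - r))" using ofl_mult_nonneg assms(1) by blast
    then have "le 0 (-1)" using assms(3) by (simp add: algebra_simps)
    then show False using ofl_not_zero_le_minus_one by simp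
  qed
  have "le 0 (1 - l)" using assms(2) ofl_le_iff_diff by blast
  then have "le 0 ((1 - l) * r)" using ofl_mult_nonneg r by blast
  then have "le 0 (r - 1)" using assms(3) by (simp add: algebra_simps)
  then show ?thesis using ofl_le_iff_diff by blast
qed

lemma ofl_three_elems: "\<exists>r1 r2 r3 :: 'a. r1 \<noteq> r2 \<and> r1 \<noteq> r3 \<and> r2 \<noteq> r3"
proof -
  have "le 1 (1 + 1)" using ofl_add_right[OF ofl_zero_le_one, of 1] by simp
  have "(1::'a) + 1 \<noteq> 0"
  proof
    assume h: "(1::'a) + 1 = 0"
    have "le 1 (1 + 1)" using ofl_add_right[OF ofl_zero_le_one, of 1] by simp
    then have "le 1 0" using h by simp
    then show False using ofl_zero_le_one ofl_antisym by fastforce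
  qed
  moreover have "(1::'a) \<noteq> 1 + 1"
  proof
    assume "(1::'a) = 1 + 1"
    then have "(1::'a) - 1 = 1 + 1 - 1" by simp
    then show False by simp
  qed
  ultimately show ?thesis by (intro exI[of _ 0] exI[of _ 1] exI[of _ "1 + 1"])
    (simp only: zero_neq_one, simp)
qed

end

definition bw :: "('a::field \<Rightarrow> 'a \<Rightarrow> bool) \<Rightarrow> 'a list \<Rightarrow> 'a list \<Rightarrow> 'a list \<Rightarrow> bool" where
  "bw le p q r \<longleftrightarrow> (\<exists>t. le 0 t \<and> le t 1 \<and> q = vadd p (smul t (vsub r p)))"

lemma Bw_iff: "[p, q, r] \<in> Bw le d \<longleftrightarrow> length p = d \<and> length q = d \<and> length r = d \<and> bw le p q r"
  unfolding Bw_def bw_def by auto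

lemma bw_iff:
  assumes "length p = d" "length q = d" "length r = d"
  shows "bw le p q r \<longleftrightarrow> (\<exists>t. le 0 t \<and> le t 1 \<and> (\<forall>i<d. q ! i = p ! i + t * (r ! i - p ! i)))"
  unfolding bw_def using eq_affine_comb_iff[OF assms] by simp

lemma col_imp_bw_cases:
  fixes p q r :: "'a::field list"
  assumes ofl: "ordered_field_le le" and l: "length p = d" "length q = d" "length r = d"
    and c: "col p q r"
  shows "r = p \<or> bw le p q r \<or> bw le p r q \<or> bw le q p r"
proof (cases "r = p")
  case True then show ?thesis by simp
next
  case rp: False
  obtain la where la: "\<forall>i<d. q ! i = p ! i + la * (r ! i - p ! i)" using c col_iff_param[OF l rp]
    by blast
  consider "le 0 la" "le la 1" | "le 1 la" | "le la 0"
    using ofl_total[OF ofl] by blast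
  then show ?thesis
  proof cases
    case 1
    then have "bw le p q r" using bw_iff[OF l] la by blast
    then show ?thesis by simp
  next
    case 2
    have la0: "la \<noteq> 0"
    proof
      assume "la = 0" then show False using 2 ofl_zero_le_one[OF ofl] ofl_antisym[OF ofl]
        by fastforce
    qed
    have "\<forall>i<d. r ! i = p ! i + (1 / la) * (q ! i - p ! i)"
      using la la0 by (simp add: field_simps)
    then have "bw le p r q" using bw_iff[OF l(1,3,2)] ofl_inverse_bounds[OF ofl 2] by blast
    then show ?thesis by simp
  next
    case 3
    define t where "t = 1 - 1 / (1 - la)"
    have t: "1 - la \<noteq> 0" "le 0 t" "le t 1" using ofl_nonpos_bounds[OF ofl 3] by (simp_all add: t_def)
    have "\<forall>i<d. p ! i = q ! i + t * (r ! i - q ! i)"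
    proof (intro allI impI)
      fix i assume i: "i < d"
      show "p ! i = q ! i + t * (r ! i - q ! i)"
        using la[rule_format, OF i] t(1) by (simp add: t_def field_simps)
    qed
    then have "bw le q p r" using bw_iff[OF l(2,1,3)] t(2,3) by blast
    then show ?thesis by simp
  qed
qed

lemma bw_cases_imp_col:
  fixes p q r :: "'a::field list"
  assumes l: "length p = d" "length q = d" "length r = d"
    and "r = p \<or> bw le p q r \<or> bw le p r q \<or> bw le q p r"
  shows "col p q r"
proof -
  from assms(4) consider "r = p" | "bw le p q r" | "bw le p r q" | "bw le q p r" by blast
  then show "col p q r"
  proof cases
    case 1 then show ?thesis unfolding col_def by simp
  next
    case 2 then show ?thesis unfolding col_def bw_def by blast
  next
    case 3
    then obtain t where t: "\<forall>i<d. r ! i = p ! i + t * (q ! i - p ! i)" using bw_iff[OF l(1,3,2)]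
      by blast
    show ?thesis
    proof (cases "t = 0")
      case True
      then have "r = p" using t l by (simp add: list_eq_iff_nth_eq)
      then show ?thesis unfolding col_def by simp
    next
      case False
      have "\<forall>i<d. q ! i = p ! i + (1 / t) * (r ! i - p ! i)"
        using t False by (simp add: field_simps)
      then show ?thesis by (rule col_intro[OF l])
    qed
  next
    case 4
    then obtain t where t: "\<forall>i<d. p ! i = q ! i + t * (r ! i - q ! i)" using bw_iff[OF l(2,1,3)]
      by blast
    show ?thesis
    proof (cases "t = 1")
      case True
      then have "r = p" using t l by (simp add: list_eq_iff_nth_eq)
      then show ?thesis unfolding col_def by simp
    next
      case False
      then have t1: "1 - t \<noteq> 0" by simp
      have "\<forall>i<d. q ! i = p ! i + (- t / (1 - t)) * (r ! i - p ! i)"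
      proof (intro allI impI)
        fix i assume i: "i < d"
        have pi: "p ! i = q ! i + t * (r ! i - q ! i)" using t i by blast
        show "q ! i = p ! i + (- t / (1 - t)) * (r ! i - p ! i)"
          unfolding pi using t1 by (simp add: field_simps)
      qed
      then show ?thesis by (rule col_intro[OF l])
    qed
  qed
qed

lemma col_iff_bw:
  fixes p q r :: "'a::field list"
  assumes ofl: "ordered_field_le le" and l: "length p = d" "length q = d" "length r = d"
  shows "col p q r \<longleftrightarrow> r = p \<or> bw le p q r \<or> bw le p r q \<or> bw le q p r"
  using col_imp_bw_cases[OF ofl l] bw_cases_imp_col[OF l] by blast

lemma line_pt_bw_iff_nonneg:
  fixes og e :: "'a::field list"
  assumes ofl: "ordered_field_le le" and l: "length og = d" "length e = d" and oe: "og \<noteq> e"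
  shows "bw le og (line_pt d og e r) e \<or> bw le og e (line_pt d og e r) \<longleftrightarrow> le 0 r"
proof
  let ?z = "line_pt d og e r"
  assume "bw le og ?z e \<or> bw le og e ?z"
  then show "le 0 r"
  proof
    assume "bw le og ?z e"
    then obtain la where la: "le 0 la" "\<forall>i<d. ?z ! i = og ! i + la * (e ! i - og ! i)"
      using bw_iff[OF l(1) length_line_pt l(2)] by blast
    then have "?z = line_pt d og e la" by (simp add: list_eq_iff_nth_eq)
    then show "le 0 r" using line_pt_inj[OF l oe] la(1) by metis
  next
    assume "bw le og e ?z"
    then obtain la where la: "le 0 la" "le la 1" "\<forall>i<d. e ! i = og ! i + la * (?z ! i - og ! i)"
      using bw_iff[OF l(1,2) length_line_pt] by blast
    obtain i0 where i0: "i0 < d" "og ! i0 \<noteq> e ! i0" using list_neq_iff_nth_neq_len[OF l] oe by auto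
    have "e ! i0 - og ! i0 = (la * r) * (e ! i0 - og ! i0)"
      using la(3) i0 by (simp add: algebra_simps)
    then have "la * r = 1" using i0 by simp
    then have "le 1 r" using ofl_one_le_inverse[OF ofl la(1,2)] by blast
    then show "le 0 r" using ofl_trans[OF ofl ofl_zero_le_one[OF ofl]] by blast
  qed
next
  assume r0: "le 0 r"
  show "bw le og (line_pt d og e r) e \<or> bw le og e (line_pt d og e r)"
  proof (cases "le r 1")
    case True
    then show ?thesis using bw_iff[OF l(1) length_line_pt l(2)] r0 by auto
  next
    case False
    then have r1: "le 1 r" using ofl_total[OF ofl] by blast
    have "r \<noteq> 0" using r1 ofl_zero_le_one[OF ofl] ofl_antisym[OF ofl] by fastforce
    then have "\<forall>i<d. e ! i = og ! i + (1 / r) * (line_pt d og e r ! i - og ! i)"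
      by (simp add: field_simps)
    then show ?thesis using bw_iff[OF l(1,2) length_line_pt] ofl_inverse_bounds[OF ofl r1] by blast
  qed
qed

text \<open>Comparison of the points representing field elements on the line og e (with og
  representing 0 and e representing 1): y - x is a nonnegative multiple of e - og.\<close>

definition line_le ::
    "('a::field \<Rightarrow> 'a \<Rightarrow> bool) \<Rightarrow> nat \<Rightarrow> 'a list \<Rightarrow> 'a list \<Rightarrow> 'a list \<Rightarrow> 'a list \<Rightarrow> bool" where
  "line_le le d og e x y \<longleftrightarrow>
     (\<exists>z\<in>Pts d. col og z e \<and> parallelogram d og x z y \<and> (bw le og z e \<or> bw le og e z))"

lemma line_le_line_pt_iff:
  fixes og e :: "'a::field list"
  assumes ofl: "ordered_field_le le" and l: "length og = d" "length e = d" and oe: "og \<noteq> e"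
    and d2: "2 \<le> d"
  shows "line_le le d og e (line_pt d og e s) (line_pt d og e t) \<longleftrightarrow> le s t"
proof -
  have three: "\<exists>r1 r2 r3 :: 'a. r1 \<noteq> r2 \<and> r1 \<noteq> r3 \<and> r2 \<noteq> r3" by (rule ofl_three_elems[OF ofl])
  have "line_le le d og e (line_pt d og e s) (line_pt d og e t) \<longleftrightarrow>
      (\<exists>r. parallelogram d og (line_pt d og e s) (line_pt d og e r) (line_pt d og e t) \<and> le 0 r)"
    unfolding line_le_def line_pt_bw_iff_nonneg[OF ofl l oe, symmetric]
    by (metis Pts_iff col_imp_line_pt[OF l _ oe] length_line_pt line_pt_col[OF l])
  also have "\<dots> \<longleftrightarrow> (\<exists>r. t = s + r \<and> le 0 r)"
    using parallelogram_line_pt_iff[OF l length_line_pt d2 three] line_pt_inj[OF l oe] by metis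
  also have "\<dots> \<longleftrightarrow> le s t" using ofl_le_iff_diff[OF ofl] by force
  finally show ?thesis .
qed

section \<open>Frames\<close>

text \<open>The affine map sending the standard frame to the frame og, es ! 0, ..., es ! (d - 1).\<close>

definition frame_map :: "nat \<Rightarrow> 'a::field list \<Rightarrow> 'a list list \<Rightarrow> 'a list \<Rightarrow> 'a list" where
  "frame_map d og es s = map (\<lambda>i. (\<Sum>j<d. (es ! j ! i - og ! i) * s ! j) + og ! i) [0..<d]"

lemma length_frame_map[simp]: "length (frame_map d og es s) = d"
  by (simp add: frame_map_def)

lemma concat_nth_block:
  assumes "\<forall>y\<in>set ys. length y = d" "l < length ys" "j < d"
  shows "concat ys ! (d * l + j) = ys ! l ! j"
  using assms
proof (induction ys arbitrary: l)
  case Nil then show ?case by simp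
next
  case (Cons y ys l)
  show ?case
  proof (cases l)
    case 0 then show ?thesis using Cons.prems by (simp add: nth_append)
  next
    case (Suc l')
    have "concat (y # ys) ! (d * l + j) = concat ys ! (d * l' + j)"
      using Cons.prems Suc by (simp add: nth_append)
    also have "\<dots> = ys ! l' ! j" using Cons.IH[of l'] Cons.prems Suc by simp
    finally show ?thesis using Suc by simp
  qed
qed

lemma length_concat_const: "\<forall>y\<in>set ys. length y = d \<Longrightarrow> length (concat ys) = d * length ys"
  by (induction ys) auto

lemma concat_block:
  assumes "\<forall>y\<in>set ys. length y = d" "l < length ys"
  shows "map (\<lambda>j. concat ys ! (d * l + j)) [0..<d] = ys ! l"
proof -
  have "length (ys ! l) = d" using assms by simp
  then show ?thesis using concat_nth_block[OF assms] by (simp add: list_eq_iff_nth_eq)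
qed

lemma block_index_less: "l < m \<Longrightarrow> j < (d::nat) \<Longrightarrow> d * l + j < d * m"
proof -
  assume l: "l < m" and j: "j < d"
  have "d * Suc l \<le> d * m" using l by (intro mult_le_mono2) simp
  then show ?thesis using j by simp
qed

lemma block_of_concat:
  assumes "\<forall>y\<in>set ys. length y = d" "length ys = m" "l < m"
    and "\<And>j. j < d * m \<Longrightarrow> f j = concat ys ! j"
  shows "map (\<lambda>j. f (d * l + j)) [0..<d] = ys ! l"
proof -
  have "map (\<lambda>j. f (d * l + j)) [0..<d] = map (\<lambda>j. concat ys ! (d * l + j)) [0..<d]"
    using assms(4) block_index_less[OF assms(3)] by (intro map_cong) auto
  also have "\<dots> = ys ! l" using concat_block[OF assms(1)] assms(2,3) by simp
  finally show ?thesis .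
qed

definition std_frame :: "nat \<Rightarrow> 'a::field list list" where
  "std_frame d = map (\<lambda>k. vec d (\<lambda>i. if i = k then 1 else 0)) [0..<d]"

lemma length_std_frame[simp]: "length (std_frame d) = d"
  by (simp add: std_frame_def)

lemma frame_map_std:
  assumes "length s = d"
  shows "frame_map d (replicate d 0) (std_frame d) s = (s :: 'a::field list)"
proof -
  have "(\<Sum>j<d. (std_frame d ! j ! i - replicate d 0 ! i) * s ! j) + replicate d 0 ! i
    = s ! i" if i: "i < d" for i
  proof -
    have "(\<Sum>j<d. (std_frame d ! j ! i - replicate d 0 ! i) * s ! j) = (\<Sum>j<d. if j
      = i then s ! j else 0)"
      by (rule sum.cong) (use i in \<open>auto simp: std_frame_def\<close>)
    also have "\<dots> = s ! i" using i by simp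
    finally show ?thesis using i by simp
  qed
  then show ?thesis using assms by (simp add: frame_map_def list_eq_iff_nth_eq)
qed

lemma std_frame_noncol:
  assumes d2: "2 \<le> d"
  shows "noncol (replicate d (0::'a::field)) (std_frame d ! 0) (std_frame d ! 1)"
proof -
  let ?o = "replicate d (0::'a)" and ?e0 = "std_frame d ! 0 :: 'a list" and ?e1
    = "std_frame d ! 1 :: 'a list"
  have e: "?e0 = vec d (\<lambda>i. if i = 0 then 1 else 0)" "?e1 = vec d (\<lambda>i. if i = 1 then 1 else 0)"
    using d2 by (simp_all add: std_frame_def)
  have ne: "?e0 \<noteq> ?o"
  proof
    assume "?e0 = ?o"
    then have "?e0 ! 0 = ?o ! 0" by simp
    then show False using e d2 by simp
  qed
  have "\<not> col ?o ?e1 ?e0"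
  proof
    assume "col ?o ?e1 ?e0"
    then obtain t where "\<forall>i<d. ?e1 ! i = ?o ! i + t * (?e0 ! i - ?o ! i)"
      using col_iff_param[of ?o d ?e1 ?e0] ne e by auto
    then have "?e1 ! 1 = ?o ! 1 + t * (?e0 ! 1 - ?o ! 1)" using d2 by auto
    then show False using e d2 by simp
  qed
  then show ?thesis unfolding noncol_def using ne by auto
qed

lemma compat_if_frame_map_id:
  assumes wfJ: "wf_geom d J" and al: "\<And>s. length s = d \<Longrightarrow> frame_map d og es s = s"
  shows "\<forall>x\<in>set J. \<forall>ys. length ys = fst x \<and> set ys \<subseteq> Pts d \<longrightarrow>
      (ys \<in> snd x \<longleftrightarrow> (\<exists>zs\<in>snd x. \<forall>l<fst x. ys ! l = frame_map d og es (zs ! l)))"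
proof (intro ballI allI impI)
  fix x and ys :: "'a list list" assume x: "x \<in> set J" and ys: "length ys = fst x \<and> set ys \<subseteq> Pts d"
  obtain m T where mT: "x = (m, T)" by fastforce
  have wT: "T \<subseteq> {ys. length ys = m \<and> set ys \<subseteq> Pts d}" using wf_geomD[OF wfJ] x mT by simp
  have "(\<forall>l<m. ys ! l = frame_map d og es (zs ! l)) \<longleftrightarrow> ys = zs" if "zs \<in> T" for zs
    using that wT ys mT al by (auto simp: subset_iff list_eq_iff_nth_eq)
  then show "ys \<in> snd x \<longleftrightarrow> (\<exists>zs\<in>snd x. \<forall>l<fst x. ys ! l = frame_map d og es (zs ! l))"
    using mT by auto
qed

definition frame_ext :: "nat \<Rightarrow> 'a::field list \<Rightarrow> 'a list list \<Rightarrow> 'a list \<Rightarrow> 'a list" where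
  "frame_ext d og es p = (if length p = d then frame_map d og es p else p)"

lemma bij_betw_frame_ext:
  assumes surj: "\<forall>p\<in>Pts d. \<exists>s. length s = d \<and> p = frame_map d og es s"
    and inj: "inj_on (frame_map d og es) {s. length s = d}"
  shows "bij_betw (frame_ext d og es) (Pts d) (Pts d)"
proof -
  have "inj_on (frame_ext d og es) (Pts d)"
    using inj unfolding frame_ext_def by (auto intro!: inj_onI dest: inj_onD)
  moreover have "frame_ext d og es ` Pts d = Pts d"
  proof
    show "frame_ext d og es ` Pts d \<subseteq> Pts d" by (auto simp: frame_ext_def)
    show "Pts d \<subseteq> frame_ext d og es ` Pts d"
    proof
      fix p :: "'a list" assume "p \<in> Pts d"
      then obtain s where s: "length s = d" "p = frame_map d og es s" using surj by blast
      then have "p = frame_ext d og es s" by (simp add: frame_ext_def)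
      then show "p \<in> frame_ext d og es ` Pts d" using s(1) by simp
    qed
  qed
  ultimately show ?thesis unfolding bij_betw_def by blast
qed

lemma frame_ext_preserves_rel:
  assumes inj: "inj_on (frame_map d og es) {s. length s = d}"
    and wT: "T \<subseteq> {xs. length xs = m \<and> set xs \<subseteq> Pts d}"
    and comp: "\<forall>ys. length ys = m \<and> set ys \<subseteq> Pts d \<longrightarrow>
        (ys \<in> T \<longleftrightarrow> (\<exists>zs\<in>T. \<forall>l<m. ys ! l = frame_map d og es (zs ! l)))"
    and lx: "length xs = m" and sx: "set xs \<subseteq> Pts d"
  shows "map (frame_ext d og es) xs \<in> T \<longleftrightarrow> xs \<in> T"
proof -
  have lxs: "\<And>l. l < m \<Longrightarrow> length (xs ! l) = d" using sx lx by (auto simp: subset_iff)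
  have nb: "\<And>l. l < m \<Longrightarrow> map (frame_ext d og es) xs ! l = frame_map d og es (xs ! l)"
    using lx lxs by (simp add: frame_ext_def)
  have "length (map (frame_ext d og es) xs) = m \<and> set (map (frame_ext d og es) xs) \<subseteq> Pts d"
    using lx sx by (auto simp: frame_ext_def)
  then have c: "map (frame_ext d og es) xs \<in> T \<longleftrightarrow>
      (\<exists>zs\<in>T. \<forall>l<m. map (frame_ext d og es) xs ! l = frame_map d og es (zs ! l))"
    using spec[OF comp, of "map (frame_ext d og es) xs"] by blast
  show ?thesis
  proof
    assume "map (frame_ext d og es) xs \<in> T"
    then obtain zs where zs: "zs \<in> T" "\<forall>l<m. map (frame_ext d og es) xs ! l
      = frame_map d og es (zs ! l)"
      using c by blast
    have lz: "length zs = m" "set zs \<subseteq> Pts d" using zs(1) wT by auto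
    have "\<forall>l<m. xs ! l = zs ! l"
    proof (intro allI impI)
      fix l assume l: "l < m"
      have "length (zs ! l) = d" using lz l by (auto simp: subset_iff)
      moreover have "frame_map d og es (xs ! l) = frame_map d og es (zs ! l)" using zs(2) nb l
        by simp
      ultimately show "xs ! l = zs ! l" using inj_onD[OF inj] lxs[OF l] by simp
    qed
    then have "xs = zs" using lx lz by (simp add: list_eq_iff_nth_eq)
    then show "xs \<in> T" using zs by simp
  next
    assume "xs \<in> T"
    then show "map (frame_ext d og es) xs \<in> T" using c nb by blast
  qed
qed

lemma affine_transf_frame_ext:
  assumes lo: "length og = d" and surj: "\<forall>p\<in>Pts d. \<exists>s. length s = d \<and> p = frame_map d og es s"
  shows "affine_transf d (frame_ext d og es)"
proof -
  \<comment> \<open>the inverse matrix is read off from preimages of og + unit vectors\<close>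
  define tk where "tk k = vec d (\<lambda>i. og ! i + (if i = k then 1 else 0))" for k
  define sk where "sk k = (SOME s. length s = d \<and> tk k = frame_map d og es s)" for k
  have sk: "length (sk k) = d \<and> tk k = frame_map d og es (sk k)" for k
  proof -
    have "\<exists>s. length s = d \<and> tk k = frame_map d og es s" using surj by (simp add: tk_def)
    then show ?thesis unfolding sk_def by (rule someI_ex)
  qed
  define M where "M i j = es ! j ! i - og ! i" for i j
  define N where "N j k = sk k ! j" for j k
  have "(\<Sum>j<d. M i j * N j k) = (if i = k then 1 else 0)" if i: "i < d" for i k
  proof -
    have "tk k ! i = frame_map d og es (sk k) ! i" using sk by simp
    then show ?thesis using i by (simp add: tk_def frame_map_def M_def N_def algebra_simps)
  qed
  moreover have "\<forall>p\<in>Pts d. frame_ext d og es p = map (\<lambda>i. (\<Sum>j<d. M i j * p ! j) + og ! i) [0..<d]"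
    by (simp add: frame_ext_def frame_map_def M_def)
  ultimately show ?thesis unfolding affine_transf_def using lo by blast
qed

lemma frame_ext_AffAut:
  assumes "length og = d"
    and surj: "\<forall>p\<in>Pts d. \<exists>s. length s = d \<and> p = frame_map d og es s"
    and inj: "inj_on (frame_map d og es) {s. length s = d}"
    and wfJ: "wf_geom d J"
    and comp: "\<forall>x\<in>set J. \<forall>ys. length ys = fst x \<and> set ys \<subseteq> Pts d \<longrightarrow>
        (ys \<in> snd x \<longleftrightarrow> (\<exists>zs\<in>snd x. \<forall>l<fst x. ys ! l = frame_map d og es (zs ! l)))"
  shows "frame_ext d og es \<in> AffAut d J"
proof -
  have "map (frame_ext d og es) xs \<in> T \<longleftrightarrow> xs \<in> T"
    if mT: "(m, T) \<in> set J" and "length xs = m" "set xs \<subseteq> Pts d" for m T xs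
  proof (rule frame_ext_preserves_rel[OF inj _ _ that(2,3)])
    show "T \<subseteq> {xs. length xs = m \<and> set xs \<subseteq> Pts d}" using wf_geomD[OF wfJ mT] by simp
    show "\<forall>ys. length ys = m \<and> set ys \<subseteq> Pts d \<longrightarrow>
        (ys \<in> T \<longleftrightarrow> (\<exists>zs\<in>T. \<forall>l<m. ys ! l = frame_map d og es (zs ! l)))"
      using bspec[OF comp mT] by simp
  qed
  then have "\<forall>(m, T)\<in>set J. \<forall>xs. length xs = m \<and> set xs \<subseteq> Pts d \<longrightarrow>
      (map (frame_ext d og es) xs \<in> T \<longleftrightarrow> xs \<in> T)" by blast
  moreover have "\<forall>x. x \<notin> Pts d \<longrightarrow> frame_ext d og es x = x" by (simp add: frame_ext_def)
  ultimately show ?thesis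
    using bij_betw_frame_ext[OF surj inj] affine_transf_frame_ext[OF assms(1) surj]
    unfolding AffAut_def Aut_def by blast
qed

section \<open>Coordinatising a geometry in which collinearity is definable\<close>

lemma line_pt_0: "length og = d \<Longrightarrow> line_pt d og e 0 = og"
  by (simp add: list_eq_iff_nth_eq)

lemma line_pt_1: "length og = d \<Longrightarrow> length e = d \<Longrightarrow> line_pt d og e 1 = e"
  by (simp add: list_eq_iff_nth_eq)

lemma ex_unique_pts:
  assumes "\<And>y. length y = d \<Longrightarrow> S y \<longleftrightarrow> y = a" "\<And>z. length z = d \<Longrightarrow> T z \<longleftrightarrow> z = b"
    and "length a = d" "length b = d"
  shows "(\<exists>y\<in>Pts d. \<exists>z\<in>Pts d. S y \<and> T z \<and> P y z) \<longleftrightarrow> P a b"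
  using assms by auto

fun ftm_maxvar :: "ftm \<Rightarrow> nat" where
  "ftm_maxvar (FVar i) = i"
| "ftm_maxvar FZero = 0"
| "ftm_maxvar FOne = 0"
| "ftm_maxvar (FAdd s t) = max (ftm_maxvar s) (ftm_maxvar t)"
| "ftm_maxvar (FMul s t) = max (ftm_maxvar s) (ftm_maxvar t)"

fun ffm_maxvar :: "ffm \<Rightarrow> nat" where
  "ffm_maxvar (FEq s t) = max (ftm_maxvar s) (ftm_maxvar t)"
| "ffm_maxvar (FLe s t) = max (ftm_maxvar s) (ftm_maxvar t)"
| "ffm_maxvar (FNeg \<phi>) = ffm_maxvar \<phi>"
| "ffm_maxvar (FAnd \<phi> \<psi>) = max (ffm_maxvar \<phi>) (ffm_maxvar \<psi>)"
| "ffm_maxvar (FEx j \<phi>) = max j (ffm_maxvar \<phi>)"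

locale coordinatizable =
  fixes d :: nat and J :: "(nat \<times> 'a::field list list set) list" and le :: "'a \<Rightarrow> 'a \<Rightarrow> bool"
    and isord :: bool
  assumes d2: "2 \<le> d"
    and three: "\<exists>r1 r2 r3 :: 'a. r1 \<noteq> r2 \<and> r1 \<noteq> r3 \<and> r2 \<noteq> r3"
    and col_expr: "\<And>i j k. expressible (Pts d) J (\<lambda>v. col (v i) (v j) (v k))"
    and ord_expr: "isord \<Longrightarrow> ordered_field_le le \<and>
      (\<forall>i j k. expressible (Pts d) J (\<lambda>v. bw le (v i) (v j) (v k)))"
begin

abbreviation expr_J where "expr_J \<equiv> expressible (Pts d) J"

lemma noncol_expr: "expr_J (\<lambda>v. noncol (v i) (v j) (v k))"
  unfolding noncol_def by (intro expressible_conj expressible_not expressible_eq col_expr)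

lemma coplanar_expr: "expr_J (\<lambda>v. coplanar d (v i) (v j) (v k) (v l))"
proof -
  define m where "m = Suc (i + j + k + l)"
  have body: "expr_J (\<lambda>v. col (v i) (v m) (v j) \<and> col (v i) (v (Suc m)) (v k) \<and> v m \<noteq> v (Suc m) \<and>
      col (v m) (v l) (v (Suc m)))"
    by (intro expressible_conj expressible_not expressible_eq col_expr)
  show ?thesis unfolding coplanar_def
    by (rule expressible_ex_fresh[where m = m], rule expressible_ex_fresh[where m = "Suc m"])
      (use body in \<open>auto simp: m_def\<close>)
qed

lemma lines_meet_expr: "expr_J (\<lambda>v. lines_meet d (v i) (v j) (v k) (v l))"
proof -
  define m where "m = Suc (i + j + k + l)"
  have body: "expr_J (\<lambda>v. col (v i) (v m) (v j) \<and> col (v k) (v m) (v l))"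
    by (intro expressible_conj col_expr)
  show ?thesis unfolding lines_meet_def
    by (rule expressible_ex_fresh[where m = m]) (use body in \<open>auto simp: m_def\<close>)
qed

lemma parallelogram_noncol_expr: "expr_J (\<lambda>v. parallelogram_noncol d (v i) (v j) (v k) (v l))"
  unfolding parallelogram_noncol_def
  by (intro expressible_conj expressible_not expressible_eq coplanar_expr lines_meet_expr)

lemma parallelogram_expr: "expr_J (\<lambda>v. parallelogram d (v i) (v j) (v k) (v l))"
proof -
  define m where "m = Suc (i + j + k + l)"
  have body: "expr_J (\<lambda>v. noncol (v i) (v j) (v m) \<and> parallelogram_noncol d (v i) (v j) (v m)
    (v (Suc m)) \<and>
      noncol (v m) (v (Suc m)) (v k) \<and> parallelogram_noncol d (v m) (v (Suc m)) (v k) (v l))"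
    by (intro expressible_conj noncol_expr parallelogram_noncol_expr)
  have "expr_J (\<lambda>v. \<exists>e\<in>Pts d. \<exists>f\<in>Pts d. noncol (v i) (v j) e
    \<and> parallelogram_noncol d (v i) (v j) e f \<and>
      noncol e f (v k) \<and> parallelogram_noncol d e f (v k) (v l))"
    by (rule expressible_ex_fresh[where m = m], rule expressible_ex_fresh[where m = "Suc m"])
      (use body in \<open>auto simp: m_def\<close>)
  then show ?thesis unfolding parallelogram_def
    by (intro expressible_conj expressible_disj expressible_not expressible_eq col_expr noncol_expr
        parallelogram_noncol_expr)
qed

lemma parallel_through_expr: "expr_J (\<lambda>v. parallel_through d (v i) (v j) (v k) (v l))"
proof -
  define m where "m = Suc (i + j + k + l)"
  have body: "expr_J (\<lambda>v. parallelogram d (v i) (v j) (v k) (v m) \<and> col (v k) (v l) (v m))"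
    by (intro expressible_conj parallelogram_expr col_expr)
  show ?thesis unfolding parallel_through_def
    by (rule expressible_ex_fresh[where m = m]) (use body in \<open>auto simp: m_def\<close>)
qed

lemma scaling_noncol_expr: "expr_J (\<lambda>v. scaling_noncol d (v i) (v j) (v k) (v l) (v n))"
  unfolding scaling_noncol_def by (intro expressible_conj parallel_through_expr col_expr)

lemma scaling_expr: "expr_J (\<lambda>v. scaling d (v i) (v j) (v k) (v l) (v n) (v r))"
proof -
  define m where "m = Suc (i + j + k + l + n + r)"
  have body: "expr_J (\<lambda>v. parallelogram d (v i) (v n) (v k) (v m) \<and>
      scaling_noncol d (v i) (v j) (v l) (v m) (v (Suc m)) \<and>
      scaling_noncol d (v i) (v j) (v l) (v k) (v (Suc (Suc m))) \<and>
      parallelogram d (v (Suc (Suc m))) (v (Suc m)) (v i) (v r))"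
    by (intro expressible_conj parallelogram_expr scaling_noncol_expr)
  have "expr_J (\<lambda>v. \<exists>p2\<in>Pts d. \<exists>q2\<in>Pts d. \<exists>w\<in>Pts d. parallelogram d (v i) (v n) (v k) p2 \<and>
      scaling_noncol d (v i) (v j) (v l) p2 q2 \<and> scaling_noncol d (v i) (v j) (v l) (v k) w \<and>
      parallelogram d w q2 (v i) (v r))"
    by (rule expressible_ex_fresh[where m = m], rule expressible_ex_fresh[where m = "Suc m"],
        rule expressible_ex_fresh[where m = "Suc (Suc m)"]) (use body in \<open>auto simp: m_def\<close>)
  then show ?thesis unfolding scaling_def
    by (intro expressible_conj expressible_disj noncol_expr scaling_noncol_expr col_expr)
qed

lemma line_le_expr:
  assumes isord
  shows "expr_J (\<lambda>v. line_le le d (v i) (v j) (v k) (v l))"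
proof -
  have bw_expr: "\<And>i j k. expr_J (\<lambda>v. bw le (v i) (v j) (v k))" using ord_expr[OF assms] by blast
  define m where "m = Suc (i + j + k + l)"
  have body: "expr_J (\<lambda>v. col (v i) (v m) (v j) \<and> parallelogram d (v i) (v k) (v m) (v l) \<and>
      (bw le (v i) (v m) (v j) \<or> bw le (v i) (v j) (v m)))"
    by (intro expressible_conj expressible_disj col_expr parallelogram_expr bw_expr)
  show ?thesis unfolding line_le_def
    by (rule expressible_ex_fresh[where m = m]) (use body in \<open>auto simp: m_def\<close>)
qed

text \<open>In an assignment v the points
  v 0 and v 1 represent 0 and 1 of the field on the line through them, v 2 is a point off that
  line (used for multiplication), v 1, ..., v d also serve as a frame later on, and the field
  variable j is represented by the point v (Suc d + j) on the line.\<close>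

fun term_pt :: "ftm \<Rightarrow> (nat \<Rightarrow> 'a list) \<Rightarrow> 'a list \<Rightarrow> bool" where
  "term_pt (FVar i) v x = (x = v (Suc d + i))"
| "term_pt FZero v x = (x = v 0)"
| "term_pt FOne v x = (x = v 1)"
| "term_pt (FAdd s t) v x = (\<exists>y\<in>Pts d. \<exists>z\<in>Pts d. col (v 0) y (v 1) \<and> col (v 0) z (v 1) \<and>
     term_pt s v y \<and> term_pt t v z \<and> parallelogram d (v 0) y z x)"
| "term_pt (FMul s t) v x = (\<exists>y\<in>Pts d. \<exists>z\<in>Pts d. col (v 0) y (v 1) \<and> col (v 0) z (v 1) \<and>
     term_pt s v y \<and> term_pt t v z \<and> scaling d (v 0) (v 1) (v 2) y z x)"

lemma term_pt_cong:
  "(\<And>j. j \<le> Suc d + ftm_maxvar t \<Longrightarrow> v j = w j) \<Longrightarrow> term_pt t v x = term_pt t w x"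
proof (induction t arbitrary: x)
  case (FAdd s t x)
  have "\<And>y. term_pt s v y = term_pt s w y" "\<And>y. term_pt t v y = term_pt t w y"
    by (rule FAdd.IH; use FAdd.prems in simp)+
  moreover have "v 0 = w 0" "v 1 = w 1" using FAdd.prems by simp_all
  ultimately show ?case by simp
next
  case (FMul s t x)
  have "\<And>y. term_pt s v y = term_pt s w y" "\<And>y. term_pt t v y = term_pt t w y"
    by (rule FMul.IH; use FMul.prems in simp)+
  moreover have "v 0 = w 0" "v 1 = w 1" "v 2 = w 2" using FMul.prems d2 by simp_all
  ultimately show ?case by simp
qed simp_all

lemma term_pt_expr: "expr_J (\<lambda>v. term_pt t v (v k))"
proof (induction t arbitrary: k)
  case (FAdd s t k)
  define m where "m = Suc (k + Suc d + ftm_maxvar s + ftm_maxvar t)"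
  have fresh: "term_pt u (v(m := a)) y = term_pt u v y" "term_pt u (v(Suc m := a)) y
    = term_pt u v y"
    if "u = s \<or> u = t" for u v a y
    by (rule term_pt_cong; use that in \<open>auto simp: m_def\<close>)+
  have neq: "0 \<noteq> m" "1 \<noteq> m" "Suc 0 \<noteq> m" "k \<noteq> m" "0 \<noteq> Suc m" "1 \<noteq> Suc m" "Suc 0 \<noteq> Suc m" "k \<noteq> Suc m"
    by (simp_all add: m_def)
  have body: "expr_J (\<lambda>v. col (v 0) (v m) (v 1) \<and> col (v 0) (v (Suc m)) (v 1) \<and> term_pt s v (v m) \<and>
      term_pt t v (v (Suc m)) \<and> parallelogram d (v 0) (v m) (v (Suc m)) (v k))"
    by (intro expressible_conj col_expr parallelogram_expr FAdd.IH)
  show ?case unfolding term_pt.simps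
    by (rule expressible_ex_fresh[where m = m], rule expressible_ex_fresh[where m = "Suc m"])
      (use body in \<open>simp_all add: fresh neq\<close>)
next
  case (FMul s t k)
  define m where "m = Suc (k + Suc d + ftm_maxvar s + ftm_maxvar t)"
  have fresh: "term_pt u (v(m := a)) y = term_pt u v y" "term_pt u (v(Suc m := a)) y
    = term_pt u v y"
    if "u = s \<or> u = t" for u v a y
    by (rule term_pt_cong; use that in \<open>auto simp: m_def\<close>)+
  have neq: "0 \<noteq> m" "1 \<noteq> m" "Suc 0 \<noteq> m" "2 \<noteq> m" "k \<noteq> m" "0 \<noteq> Suc m" "1 \<noteq> Suc m" "Suc 0 \<noteq> Suc m" "2 \<noteq>
    Suc m" "k \<noteq> Suc m"
    using d2 by (simp_all add: m_def)
  have body: "expr_J (\<lambda>v. col (v 0) (v m) (v 1) \<and> col (v 0) (v (Suc m)) (v 1) \<and> term_pt s v (v m) \<and>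
      term_pt t v (v (Suc m)) \<and> scaling d (v 0) (v 1) (v 2) (v m) (v (Suc m)) (v k))"
    by (intro expressible_conj col_expr scaling_expr FMul.IH)
  show ?case unfolding term_pt.simps
    by (rule expressible_ex_fresh[where m = m], rule expressible_ex_fresh[where m = "Suc m"])
      (use body in \<open>simp_all add: fresh neq\<close>)
qed (simp_all add: expressible_eq)

abbreviation lcoord :: "(nat \<Rightarrow> 'a list) \<Rightarrow> 'a list \<Rightarrow> 'a" where
  "lcoord v \<equiv> line_coord d (v 0) (v 1)"

definition field_asg :: "(nat \<Rightarrow> 'a list) \<Rightarrow> nat \<Rightarrow> 'a" where
  "field_asg v j = lcoord v (v (Suc d + j))"

lemma ex_line_pts_iff:
  assumes "length og = d" "length e = d"
    and S: "\<And>y. length y = d \<Longrightarrow> S y \<longleftrightarrow> y = line_pt d og e a"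
    and T: "\<And>z. length z = d \<Longrightarrow> T z \<longleftrightarrow> z = line_pt d og e b"
  shows "(\<exists>y\<in>Pts d. \<exists>z\<in>Pts d. col og y e \<and> col og z e \<and> S y \<and> T z \<and> P y z) \<longleftrightarrow>
    P (line_pt d og e a) (line_pt d og e b)"
  using S T line_pt_col[OF assms(1,2)] by auto

lemma term_pt_iff:
  assumes U: "\<And>i. length (v i) = d" and oe: "v 0 \<noteq> v 1" and n: "noncol (v 0) (v 1) (v 2)"
    and on_line: "\<And>j. j \<le> ftm_maxvar t \<Longrightarrow> col (v 0) (v (Suc d + j)) (v 1)" and lx: "length x = d"
  shows "term_pt t v x \<longleftrightarrow> x = line_pt d (v 0) (v 1) (feval t (field_asg v))"
  using on_line lx
proof (induction t arbitrary: x)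
  case (FVar i x)
  have "line_pt d (v 0) (v 1) (field_asg v i) = v (Suc d + i)"
    unfolding field_asg_def by (rule line_pt_line_coord[OF U U U oe FVar.prems(1)]) simp
  then show ?case by auto
next
  case (FZero x) then show ?case using line_pt_0[OF U] by simp
next
  case (FOne x) then show ?case using line_pt_1[OF U U] by simp
next
  case (FAdd s t x)
  have "term_pt (FAdd s t) v x \<longleftrightarrow> parallelogram d (v 0)
    (line_pt d (v 0) (v 1) (feval s (field_asg v)))
      (line_pt d (v 0) (v 1) (feval t (field_asg v))) x"
    unfolding term_pt.simps by (rule ex_line_pts_iff[OF U U]; rule FAdd.IH; use FAdd.prems in auto)
  also have "\<dots> \<longleftrightarrow> x = line_pt d (v 0) (v 1) (feval (FAdd s t) (field_asg v))"
    using parallelogram_line_pt_iff[OF U U FAdd.prems(2) d2 three] by simp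
  finally show ?case .
next
  case (FMul s t x)
  have "term_pt (FMul s t) v x \<longleftrightarrow> scaling d (v 0) (v 1) (v 2)
    (line_pt d (v 0) (v 1) (feval s (field_asg v)))
      (line_pt d (v 0) (v 1) (feval t (field_asg v))) x"
    unfolding term_pt.simps by (rule ex_line_pts_iff[OF U U]; rule FMul.IH; use FMul.prems in auto)
  also have "\<dots> \<longleftrightarrow> x = line_pt d (v 0) (v 1) (feval (FMul s t) (field_asg v))"
    using scaling_line_pt_iff[OF U U U FMul.prems(2) d2 three n] by simp
  finally show ?case .
qed

fun formula_pt :: "ffm \<Rightarrow> (nat \<Rightarrow> 'a list) \<Rightarrow> bool" where
  "formula_pt (FEq s t) v = (\<exists>x\<in>Pts d. \<exists>y\<in>Pts d. col (v 0) x (v 1) \<and> col (v 0) y (v 1) \<and>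
     term_pt s v x \<and> term_pt t v y \<and> x = y)"
| "formula_pt (FLe s t) v = (\<exists>x\<in>Pts d. \<exists>y\<in>Pts d. col (v 0) x (v 1) \<and> col (v 0) y (v 1) \<and>
     term_pt s v x \<and> term_pt t v y \<and> line_le le d (v 0) (v 1) x y)"
| "formula_pt (FNeg \<phi>) v = (\<not> formula_pt \<phi> v)"
| "formula_pt (FAnd \<phi> \<psi>) v = (formula_pt \<phi> v \<and> formula_pt \<psi> v)"
| "formula_pt (FEx j \<phi>) v = (\<exists>a\<in>Pts d. col (v 0) a (v 1) \<and> formula_pt \<phi> (v(Suc d + j := a)))"

lemma formula_pt_expr: "isord \<or> le_free \<phi> \<Longrightarrow> expr_J (formula_pt \<phi>)"
proof (induction \<phi>)
  case (FEq s t)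
  define m where "m = Suc (Suc d + ftm_maxvar s + ftm_maxvar t)"
  have fresh: "term_pt u (v(m := a)) y = term_pt u v y" "term_pt u (v(Suc m := a)) y
    = term_pt u v y"
    if "u = s \<or> u = t" for u v a y
    by (rule term_pt_cong; use that in \<open>auto simp: m_def\<close>)+
  have neq: "0 \<noteq> m" "1 \<noteq> m" "Suc 0 \<noteq> m" "0 \<noteq> Suc m" "1 \<noteq> Suc m" "Suc 0 \<noteq> Suc m"
    by (simp_all add: m_def)
  have body: "expr_J (\<lambda>v. col (v 0) (v m) (v 1) \<and> col (v 0) (v (Suc m)) (v 1) \<and> term_pt s v (v m) \<and>
      term_pt t v (v (Suc m)) \<and> v m = v (Suc m))"
    by (intro expressible_conj expressible_eq col_expr term_pt_expr)
  show ?case unfolding formula_pt.simps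
    by (rule expressible_ex_fresh[where m = m], rule expressible_ex_fresh[where m = "Suc m"])
      (use body in \<open>simp_all add: fresh neq\<close>)
next
  case (FLe s t)
  define m where "m = Suc (Suc d + ftm_maxvar s + ftm_maxvar t)"
  have fresh: "term_pt u (v(m := a)) y = term_pt u v y" "term_pt u (v(Suc m := a)) y
    = term_pt u v y"
    if "u = s \<or> u = t" for u v a y
    by (rule term_pt_cong; use that in \<open>auto simp: m_def\<close>)+
  have neq: "0 \<noteq> m" "1 \<noteq> m" "Suc 0 \<noteq> m" "0 \<noteq> Suc m" "1 \<noteq> Suc m" "Suc 0 \<noteq> Suc m"
    by (simp_all add: m_def)
  have body: "expr_J (\<lambda>v. col (v 0) (v m) (v 1) \<and> col (v 0) (v (Suc m)) (v 1) \<and> term_pt s v (v m) \<and>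
      term_pt t v (v (Suc m)) \<and> line_le le d (v 0) (v 1) (v m) (v (Suc m)))"
    using FLe by (intro expressible_conj col_expr term_pt_expr line_le_expr) simp
  show ?case unfolding formula_pt.simps
    by (rule expressible_ex_fresh[where m = m], rule expressible_ex_fresh[where m = "Suc m"])
      (use body in \<open>simp_all add: fresh neq\<close>)
next
  case (FEx j \<phi>)
  then have "expr_J (\<lambda>v. col (v 0) (v (Suc d + j)) (v 1) \<and> formula_pt \<phi> v)"
    by (intro expressible_conj col_expr) simp
  then have "expr_J (\<lambda>v. \<exists>a\<in>Pts d. col ((v(Suc d + j := a)) 0) ((v(Suc d + j := a)) (Suc d + j))
      ((v(Suc d + j := a)) 1) \<and> formula_pt \<phi> (v(Suc d + j := a)))"
    by (rule expressible_ex)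
  then show ?case by (rule expressible_cong) (use d2 in simp)
next
  case (FNeg \<phi>)
  then have "expr_J (\<lambda>v. \<not> formula_pt \<phi> v)" by (intro expressible_not) simp
  then show ?case by simp
next
  case (FAnd \<phi> \<psi>)
  then have "expr_J (\<lambda>v. formula_pt \<phi> v \<and> formula_pt \<psi> v)" by (intro expressible_conj) auto
  then show ?case by simp
qed

lemma field_asg_upd: "field_asg (v(Suc d + j := a)) = (field_asg v)(j := lcoord v a)"
  using d2 by (auto simp: field_asg_def fun_eq_iff)

lemma formula_pt_iff:
  assumes "\<And>i. length (v i) = d" and "v 0 \<noteq> v 1" and "noncol (v 0) (v 1) (v 2)"
    and "\<And>j. j \<le> ffm_maxvar \<phi> \<Longrightarrow> col (v 0) (v (Suc d + j)) (v 1)" and "isord \<or> le_free \<phi>"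
  shows "formula_pt \<phi> v \<longleftrightarrow> fsat le \<phi> (field_asg v)"
  using assms
proof (induction \<phi> arbitrary: v)
  case (FEq s t v)
  note U = FEq.prems(1) and oe = FEq.prems(2)
  have "formula_pt (FEq s t) v \<longleftrightarrow>
      line_pt d (v 0) (v 1) (feval s (field_asg v)) = line_pt d (v 0) (v 1) (feval t (field_asg v))"
    unfolding formula_pt.simps by (rule ex_line_pts_iff[OF U U]; rule term_pt_iff; use FEq.prems in
      auto)
  then show ?case using line_pt_inj[OF U U oe] by auto
next
  case (FLe s t v)
  note U = FLe.prems(1) and oe = FLe.prems(2)
  have ofl: "ordered_field_le le" using ord_expr FLe.prems(5) by simp
  have "formula_pt (FLe s t) v \<longleftrightarrow> line_le le d (v 0) (v 1)
      (line_pt d (v 0) (v 1) (feval s (field_asg v)))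
        (line_pt d (v 0) (v 1) (feval t (field_asg v)))"
    unfolding formula_pt.simps by (rule ex_line_pts_iff[OF U U]; rule term_pt_iff; use FLe.prems in
      auto)
  then show ?case using line_le_line_pt_iff[OF ofl U U oe d2] by simp
next
  case (FNeg \<phi> v)
  have "formula_pt \<phi> v \<longleftrightarrow> fsat le \<phi> (field_asg v)" by (rule FNeg.IH) (use FNeg.prems in auto)
  then show ?case by simp
next
  case (FAnd \<phi> \<psi> v)
  have "formula_pt \<phi> v \<longleftrightarrow> fsat le \<phi> (field_asg v)" by (rule FAnd.IH(1)) (use FAnd.prems in auto)
  moreover have "formula_pt \<psi> v \<longleftrightarrow> fsat le \<psi> (field_asg v)"
    by (rule FAnd.IH(2)) (use FAnd.prems in auto)
  ultimately show ?case by simp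
next
  case (FEx j \<phi> v)
  note U = FEx.prems(1) and oe = FEx.prems(2)
  have IH: "formula_pt \<phi> (v(Suc d + j := a)) \<longleftrightarrow> fsat le \<phi> ((field_asg v)(j := lcoord v a))"
    if a: "length a = d" "col (v 0) a (v 1)" for a
    unfolding field_asg_upd[symmetric]
    by (rule FEx.IH) (use FEx.prems a d2 in \<open>auto simp: nth_append\<close>)
  have "formula_pt (FEx j \<phi>) v \<longleftrightarrow>
      (\<exists>a\<in>Pts d. col (v 0) a (v 1) \<and> fsat le \<phi> ((field_asg v)(j := lcoord v a)))"
    using IH by auto
  also have "\<dots> \<longleftrightarrow> (\<exists>r. fsat le \<phi> ((field_asg v)(j := r)))"
    using col_imp_line_pt[OF U U _ oe] line_pt_col[OF U U] line_coord_line_pt[OF U U oe]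
    by (metis Pts_iff length_line_pt)
  finally show ?case by simp
qed

text \<open>lincomb_pt b k v r says r = v 0 + (\<Sum>j<k. x j * (v (Suc j) - v 0)), where the coefficient
  x j is the field element represented by the point v (Suc d + b + j).\<close>

fun lincomb_pt :: "nat \<Rightarrow> nat \<Rightarrow> (nat \<Rightarrow> 'a list) \<Rightarrow> 'a list \<Rightarrow> bool" where
  "lincomb_pt b 0 v r = (r = v 0)"
| "lincomb_pt b (Suc k) v r = (\<exists>r'\<in>Pts d. \<exists>q\<in>Pts d. lincomb_pt b k v r' \<and>
     scaling d (v 0) (v 1) (v 2) (v (Suc d + b + k)) (v (Suc k)) q \<and> parallelogram d (v 0) r' q r)"

lemma lincomb_pt_cong: "(\<And>j. j < Suc d + b + k \<Longrightarrow> v j = w j)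
  \<Longrightarrow> lincomb_pt b k v r = lincomb_pt b k w r"
proof (induction k arbitrary: r)
  case 0
  then show ?case by simp
next
  case (Suc k r)
  have 1: "\<And>y. lincomb_pt b k v y = lincomb_pt b k w y" by (rule Suc.IH) (use Suc.prems in simp)
  have "v 0 = w 0" "v 1 = w 1" "v 2 = w 2" "v (Suc d + b + k) = w (Suc d + b + k)" "v (Suc k)
    = w (Suc k)"
    using Suc.prems[of 0] Suc.prems[of 1] Suc.prems[of 2] Suc.prems[of "Suc d + b + k"] Suc.prems[of
      "Suc k"] d2
    by simp_all
  then show ?case by (simp add: 1)
qed

lemma lincomb_pt_expr: "expr_J (\<lambda>v. lincomb_pt b k v (v x))"
proof (induction k arbitrary: x)
  case (Suc k x)
  define m where "m = Suc (x + Suc d + b + k)"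
  have fresh: "lincomb_pt b k (v(m := a)) y = lincomb_pt b k v y"
    "lincomb_pt b k (v(Suc m := a)) y = lincomb_pt b k v y" for v a y
    by (rule lincomb_pt_cong; simp add: m_def)+
  have neq: "0 \<noteq> m" "Suc 0 \<noteq> m" "2 \<noteq> m" "x \<noteq> m" "Suc d + b + k \<noteq> m" "Suc k \<noteq> m" "k \<noteq> m"
    "0 \<noteq> Suc m" "Suc 0 \<noteq> Suc m" "2 \<noteq> Suc m" "x \<noteq> Suc m" "Suc d + b + k \<noteq> Suc m" "Suc k \<noteq> Suc m"
    using d2 by (simp_all add: m_def)
  have body: "expr_J (\<lambda>v. lincomb_pt b k v (v m) \<and>
      scaling d (v 0) (v 1) (v 2) (v (Suc d + b + k)) (v (Suc k)) (v (Suc m)) \<and>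
      parallelogram d (v 0) (v m) (v (Suc m)) (v x))"
    by (intro expressible_conj scaling_expr parallelogram_expr Suc.IH)
  show ?case unfolding lincomb_pt.simps
    by (rule expressible_ex_fresh[where m = m], rule expressible_ex_fresh[where m = "Suc m"])
      (use body in \<open>simp_all add: fresh neq del: add_Suc add_Suc_right\<close>)
qed (simp add: expressible_eq)

definition lincomb :: "nat \<Rightarrow> nat \<Rightarrow> (nat \<Rightarrow> 'a list) \<Rightarrow> 'a list" where
  "lincomb b k v = map (\<lambda>i. (\<Sum>j<k. (v (Suc j) ! i - v 0 ! i) * lcoord v (v (Suc d + b + j))) + v 0 !
    i) [0..<d]"

lemma lincomb_pt_iff:
  assumes U: "\<And>i. length (v i) = d" and oe: "v 0 \<noteq> v 1" and n: "noncol (v 0) (v 1) (v 2)"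
    and sl: "\<And>j. j < k \<Longrightarrow> col (v 0) (v (Suc d + b + j)) (v 1)" and lr: "length r = d"
  shows "lincomb_pt b k v r \<longleftrightarrow> r = lincomb b k v"
  using sl lr
proof (induction k arbitrary: r)
  case (0 r)
  have "lincomb b 0 v = v 0" using U[of 0] by (simp add: lincomb_def list_eq_iff_nth_eq)
  then show ?case by simp
next
  case (Suc k r)
  let ?x = "v (Suc d + b + k)"
  let ?s = "lcoord v ?x"
  have IH: "\<And>y. length y = d \<Longrightarrow> lincomb_pt b k v y \<longleftrightarrow> y = lincomb b k v"
    by (rule Suc.IH) (use Suc.prems in auto)
  have xe: "line_pt d (v 0) (v 1) ?s = ?x" by (rule line_pt_line_coord[OF U U U oe Suc.prems(1)])
    simp
  have x: "\<forall>i<d. ?x ! i = v 0 ! i + ?s * (v 1 ! i - v 0 ! i)"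
    using xe by (metis nth_line_pt)
  define q where "q = vec d (\<lambda>i. v 0 ! i + ?s * (v (Suc k) ! i - v 0 ! i))"
  have SM: "\<And>y. length y = d \<Longrightarrow> scaling d (v 0) (v 1) (v 2) ?x (v (Suc k)) y \<longleftrightarrow> y = q"
    using scaling_iff[OF U U U U U _ d2 three n x] by (auto simp: q_def list_eq_iff_nth_eq)
  have "lincomb_pt b (Suc k) v r \<longleftrightarrow> parallelogram d (v 0) (lincomb b k v) q r"
    unfolding lincomb_pt.simps by (rule ex_unique_pts[OF IH SM]) (simp_all add: lincomb_def q_def)
  also have "\<dots> \<longleftrightarrow> (\<forall>i<d. r ! i = lincomb b k v ! i + q ! i - v 0 ! i)"
    by (rule parallelogram_iff[OF U _ _ Suc.prems(2) d2 three]) (simp_all add: lincomb_def q_def)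
  also have "\<dots> \<longleftrightarrow> r = lincomb b (Suc k) v"
    using Suc.prems(2) by (auto simp: list_eq_iff_nth_eq lincomb_def q_def algebra_simps)
  finally show ?case .
qed

definition frame_pts :: "(nat \<Rightarrow> 'a list) \<Rightarrow> 'a list list" where
  "frame_pts v = map (\<lambda>j. v (Suc j)) [0..<d]"

abbreviation fmap :: "(nat \<Rightarrow> 'a list) \<Rightarrow> 'a list \<Rightarrow> 'a list" where
  "fmap v \<equiv> frame_map d (v 0) (frame_pts v)"

lemma lincomb_frame_map:
  "lincomb b d v = fmap v (map (\<lambda>j. lcoord v (v (Suc d + b + j))) [0..<d])"
  unfolding lincomb_def frame_map_def frame_pts_def by (intro map_cong refl arg_cong2[where f
    = "(+)"] sum.cong) auto

lemma frame_pts_cong: "(\<And>i. i \<le> d \<Longrightarrow> v i = w i) \<Longrightarrow> frame_pts v = frame_pts w"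
  by (simp add: frame_pts_def)

text \<open>A frame is given by the points v 0, ..., v d; it is a genuine affine frame iff the associated
  map frame_map is bijective, which is expressed pointwise: the point under test sits at position
  probe, its d (or 2 d) candidate coordinates at positions Suc d, Suc d + 1, ....\<close>

abbreviation probe where "probe \<equiv> Suc d + 2 * d"

definition frame_surj_at :: "(nat \<Rightarrow> 'a list) \<Rightarrow> bool" where
  "frame_surj_at v \<longleftrightarrow> (\<forall>j<d. col (v 0) (v (Suc d + j)) (v 1)) \<and> lincomb_pt 0 d v (v probe)"

definition frame_surj :: "(nat \<Rightarrow> 'a list) \<Rightarrow> bool" where
  "frame_surj v \<longleftrightarrow> (\<forall>a\<in>Pts d. (\<lambda>v. \<exists>cs. length cs = d \<and> set cs \<subseteq> Pts d
    \<and> frame_surj_at (block_upd v (Suc d) cs)) (v(probe := a)))"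

definition frame_inj_at :: "(nat \<Rightarrow> 'a list) \<Rightarrow> bool" where
  "frame_inj_at v \<longleftrightarrow> ((\<forall>j<2 * d. col (v 0) (v (Suc d + j)) (v 1)) \<and> lincomb_pt 0 d v (v probe)
    \<and> lincomb_pt d d v (v probe) \<longrightarrow>
      (\<forall>j<d. v (Suc d + j) = v (Suc d + d + j)))"

definition frame_inj :: "(nat \<Rightarrow> 'a list) \<Rightarrow> bool" where
  "frame_inj v \<longleftrightarrow> (\<forall>a\<in>Pts d. (\<lambda>v. \<forall>cs. length cs = 2 * d \<and> set cs \<subseteq> Pts d
    \<longrightarrow> frame_inj_at (block_upd v (Suc d) cs)) (v(probe := a)))"

definition is_frame :: "(nat \<Rightarrow> 'a list) \<Rightarrow> bool" where
  "is_frame v \<longleftrightarrow> v 0 \<noteq> v 1 \<and> noncol (v 0) (v 1) (v 2) \<and> frame_surj v \<and> frame_inj v"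

lemma is_frame_expr: "expr_J is_frame"
proof -
  have "expr_J frame_surj_at" unfolding frame_surj_at_def
    by (intro expressible_conj expressible_all_less col_expr lincomb_pt_expr)
  then have s: "expr_J frame_surj" unfolding frame_surj_def
    by (intro expressible_all expressible_ex_block)
  have "expr_J frame_inj_at" unfolding frame_inj_at_def by (intro expressible_imp expressible_conj
    expressible_all_less col_expr lincomb_pt_expr expressible_eq)
  then have i: "expr_J frame_inj" unfolding frame_inj_def
    by (intro expressible_all expressible_all_block)
  have "expr_J (\<lambda>v. \<not> v 0 = v 1 \<and> noncol (v 0) (v 1) (v 2) \<and> frame_surj v \<and> frame_inj v)"
    by (intro expressible_conj expressible_not expressible_eq noncol_expr s i)
  then show ?thesis unfolding is_frame_def by simp
qed

lemma lincomb_pt_block_upd: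
  assumes U: "\<And>i. length (v i) = d" and oe: "v 0 \<noteq> v 1" and n: "noncol (v 0) (v 1) (v 2)"
    and lcs: "set cs \<subseteq> Pts d" and bl: "b + d \<le> length cs"
    and sl: "\<And>j. j < d \<Longrightarrow> col (v 0) (cs ! (b + j)) (v 1)" and lr: "length r = d"
  shows "lincomb_pt b d (block_upd v (Suc d) cs) r \<longleftrightarrow>
     r = fmap v (map (\<lambda>j. lcoord v (cs ! (b + j))) [0..<d])"
proof -
  let ?w = "block_upd v (Suc d) cs"
  have Uw: "\<And>i. length (?w i) = d" using block_upd_in[of v "Pts d" cs "Suc d"] U lcs by simp
  have w0: "?w 0 = v 0" "?w 1 = v 1" "?w 2 = v 2" using d2 by simp_all
  have ws: "\<And>j. j < d \<Longrightarrow> ?w (Suc d + b + j) = cs ! (b + j)"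
  proof -
    fix j assume "j < d"
    then have "b + j < length cs" using bl by simp
    then show "?w (Suc d + b + j) = cs ! (b + j)" using block_upd_inside[of "b + j" cs v "Suc d"]
      by (simp add: add.assoc)
  qed
  have "lincomb_pt b d ?w r \<longleftrightarrow> r = lincomb b d ?w"
    by (rule lincomb_pt_iff[OF Uw]) (use w0 oe n sl ws lr in auto)
  also have "lincomb b d ?w = fmap v (map (\<lambda>j. lcoord v (cs ! (b + j))) [0..<d])"
  proof -
    have m: "map (\<lambda>j. lcoord v (?w (Suc d + b + j))) [0..<d]
      = map (\<lambda>j. lcoord v (cs ! (b + j))) [0..<d]"
      using ws by (intro map_cong) auto
    have e: "frame_pts ?w = frame_pts v" by (rule frame_pts_cong) simp
    show ?thesis unfolding lincomb_frame_map w0 m e ..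
  qed
  finally show ?thesis .
qed

lemma map_line_coord_line_pt:
  assumes U: "\<And>i. length (v i) = d" and oe: "v 0 \<noteq> v 1" and ls: "length s = d"
  shows "map (\<lambda>j. lcoord v (map (line_pt d (v 0) (v 1)) s ! j)) [0..<d] = s"
  using ls line_coord_line_pt[OF U U oe] by (simp add: list_eq_iff_nth_eq)

lemma frame_surj_at_iff:
  assumes U: "\<And>i. length (v i) = d" and oe: "v 0 \<noteq> v 1" and n: "noncol (v 0) (v 1) (v 2)"
    and la: "length a = d" and lcs: "length cs = d" "set cs \<subseteq> Pts d"
  shows "frame_surj_at (block_upd (v(probe := a)) (Suc d) cs) \<longleftrightarrow> (\<forall>j<d. col (v 0) (cs ! j) (v 1)) \<and>
     a = fmap v (map (\<lambda>j. lcoord v (cs ! j)) [0..<d])"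
proof -
  let ?v = "v(probe := a)"
  have Uv: "\<And>i. length (?v i) = d" using U la by simp
  have v0: "?v 0 = v 0" "?v 1 = v 1" "?v 2 = v 2" using d2 by simp_all
  have ev: "frame_pts ?v = frame_pts v" by (rule frame_pts_cong) simp
  have wM: "block_upd ?v (Suc d) cs probe = a" using lcs by (simp add: block_upd_above)
  have ws: "\<And>j. j < d \<Longrightarrow> block_upd ?v (Suc d) cs (Suc d + j) = cs ! j" using lcs
    by (simp add: block_upd_def)
  show ?thesis
  proof (cases "\<forall>j<d. col (v 0) (cs ! j) (v 1)")
    case True
    have "lincomb_pt 0 d (block_upd ?v (Suc d) cs) a \<longleftrightarrow>
        a = frame_map d (?v 0) (frame_pts ?v) (map (\<lambda>j. line_coord d (?v 0) (?v 1) (cs ! (0 + j)))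
          [0..<d])"
      by (rule lincomb_pt_block_upd[OF Uv]) (use v0 oe n lcs True la in auto)
    then show ?thesis unfolding frame_surj_at_def using True ws wM v0 ev by simp
  next
    case False
    then show ?thesis unfolding frame_surj_at_def using ws v0 by auto
  qed
qed

lemma frame_surj_iff:
  assumes U: "\<And>i. length (v i) = d" and oe: "v 0 \<noteq> v 1" and n: "noncol (v 0) (v 1) (v 2)"
  shows "frame_surj v \<longleftrightarrow> (\<forall>p\<in>Pts d. \<exists>s. length s = d \<and> p = fmap v s)"
proof
  assume h: "frame_surj v"
  show "\<forall>p\<in>Pts d. \<exists>s. length s = d \<and> p = fmap v s"
  proof
    fix p :: "'a list" assume p: "p \<in> Pts d"
    have "\<exists>cs. length cs = d \<and> set cs \<subseteq> Pts d \<and> frame_surj_at (block_upd (v(probe := p)) (Suc d)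
      cs)"
      using bspec[OF h[unfolded frame_surj_def] p] by simp
    then obtain cs where cs: "length cs = d" "set cs \<subseteq> Pts d" "frame_surj_at
      (block_upd (v(probe := p)) (Suc d) cs)"
      by blast
    have "p = fmap v (map (\<lambda>j. lcoord v (cs ! j)) [0..<d])"
      using frame_surj_at_iff[OF U oe n _ cs(1,2), of p] p cs(3) by simp
    then show "\<exists>s. length s = d \<and> p = fmap v s"
      by (intro exI[of _ "map (\<lambda>j. lcoord v (cs ! j)) [0..<d]"]) simp
  qed
next
  assume h: "\<forall>p\<in>Pts d. \<exists>s. length s = d \<and> p = fmap v s"
  show "frame_surj v" unfolding frame_surj_def
  proof
    fix a :: "'a list" assume a: "a \<in> Pts d"
    then obtain s where s: "length s = d" "a = fmap v s" using h by blast
    let ?cs = "map (line_pt d (v 0) (v 1)) s"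
    have l: "length ?cs = d" "set ?cs \<subseteq> Pts d" using s by auto
    have c: "\<forall>j<d. col (v 0) (?cs ! j) (v 1)" using s line_pt_col[OF U U] by simp
    have "frame_surj_at (block_upd (v(probe := a)) (Suc d) ?cs)"
      using frame_surj_at_iff[OF U oe n _ l] a c s map_line_coord_line_pt[OF U oe s(1)] by simp
    then show "\<exists>cs. length cs = d \<and> set cs \<subseteq> Pts d \<and> frame_surj_at
      (block_upd (v(probe := a)) (Suc d) cs)"
      using l by blast
  qed
qed

lemma frame_inj_at_iff:
  assumes U: "\<And>i. length (v i) = d" and oe: "v 0 \<noteq> v 1" and n: "noncol (v 0) (v 1) (v 2)"
    and la: "length a = d" and lcs: "length cs = 2 * d" "set cs \<subseteq> Pts d"
  shows "frame_inj_at (block_upd (v(probe := a)) (Suc d) cs) \<longleftrightarrow>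
    ((\<forall>j<2 * d. col (v 0) (cs ! j) (v 1)) \<and>
     a = fmap v (map (\<lambda>j. lcoord v (cs ! j)) [0..<d]) \<and>
     a = fmap v (map (\<lambda>j. lcoord v (cs ! (d + j))) [0..<d]) \<longrightarrow>
     (\<forall>j<d. cs ! j = cs ! (d + j)))"
proof -
  let ?v = "v(probe := a)"
  have Uv: "\<And>i. length (?v i) = d" using U la by simp
  have v0: "?v 0 = v 0" "?v 1 = v 1" "?v 2 = v 2" using d2 by simp_all
  have ev: "frame_pts ?v = frame_pts v" by (rule frame_pts_cong) simp
  have wM: "block_upd ?v (Suc d) cs probe = a" using lcs by (simp add: block_upd_above)
  have ws: "\<And>j. j < 2 * d \<Longrightarrow> block_upd ?v (Suc d) cs (Suc d + j) = cs ! j" using lcs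
    by (simp add: block_upd_def)
  have ws2: "\<And>j. j < d \<Longrightarrow> block_upd ?v (Suc d) cs (Suc d + d + j) = cs ! (d + j)"
    using ws by (metis add.assoc add_less_cancel_left mult_2)
  show ?thesis
  proof (cases "\<forall>j<2 * d. col (v 0) (cs ! j) (v 1)")
    case True
    have P1: "lincomb_pt 0 d (block_upd ?v (Suc d) cs) a \<longleftrightarrow>
        a = frame_map d (?v 0) (frame_pts ?v) (map (\<lambda>j. line_coord d (?v 0) (?v 1) (cs ! (0 + j)))
          [0..<d])"
      by (rule lincomb_pt_block_upd[OF Uv]) (use v0 oe n lcs True la in auto)
    have P2: "lincomb_pt d d (block_upd ?v (Suc d) cs) a \<longleftrightarrow>
        a = frame_map d (?v 0) (frame_pts ?v) (map (\<lambda>j. line_coord d (?v 0) (?v 1) (cs ! (d + j)))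
          [0..<d])"
      by (rule lincomb_pt_block_upd[OF Uv]) (use v0 oe n lcs True la in auto)
    have eA: "(\<forall>j<2 * d. col (block_upd ?v (Suc d) cs 0) (block_upd ?v (Suc d) cs (Suc d + j))
      (block_upd ?v (Suc d) cs 1)) =
        (\<forall>j<2 * d. col (v 0) (cs ! j) (v 1))"
      using True ws v0 by simp
    have eB: "lincomb_pt 0 d (block_upd ?v (Suc d) cs) (block_upd ?v (Suc d) cs probe) =
        (a = fmap v (map (\<lambda>j. lcoord v (cs ! j)) [0..<d]))"
      unfolding wM P1 v0 ev by simp
    have eC: "lincomb_pt d d (block_upd ?v (Suc d) cs) (block_upd ?v (Suc d) cs probe) =
        (a = fmap v (map (\<lambda>j. lcoord v (cs ! (d + j))) [0..<d]))"
      unfolding wM P2 v0 ev by simp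
    have eD: "(\<forall>j<d. block_upd ?v (Suc d) cs (Suc d + j)
      = block_upd ?v (Suc d) cs (Suc d + d + j)) =
        (\<forall>j<d. cs ! j = cs ! (d + j))" using ws ws2 by auto
    show ?thesis unfolding frame_inj_at_def eA eB eC eD ..
  next
    case False
    have "\<not> (\<forall>j<2 * d. col (block_upd ?v (Suc d) cs 0) (block_upd ?v (Suc d) cs (Suc d + j))
      (block_upd ?v (Suc d) cs 1))"
      using False ws v0 by simp
    then show ?thesis unfolding frame_inj_at_def using False by blast
  qed
qed

lemma frame_inj_imp_inj_on:
  assumes U: "\<And>i. length (v i) = d" and oe: "v 0 \<noteq> v 1" and n: "noncol (v 0) (v 1) (v 2)"
    and h: "frame_inj v"
  shows "inj_on (fmap v) {s. length s = d}"
proof (rule inj_onI)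
  fix s1 s2 :: "'a list" assume s1: "s1 \<in> {s. length s = d}" and s2: "s2 \<in> {s. length s = d}"
    and eq: "fmap v s1 = fmap v s2"
  let ?a = "fmap v s1"
  let ?cs = "map (line_pt d (v 0) (v 1)) s1 @ map (line_pt d (v 0) (v 1)) s2"
  have l1: "length s1 = d" and l2: "length s2 = d" using s1 s2 by auto
  have lcs: "length ?cs = 2 * d" "set ?cs \<subseteq> Pts d" using l1 l2 by auto
  have a: "?a \<in> Pts d" by simp
  have c: "\<forall>j<2 * d. col (v 0) (?cs ! j) (v 1)"
    using line_pt_col[OF U U] l1 l2 by (auto simp: nth_append)
  have m1: "map (\<lambda>j. lcoord v (?cs ! j)) [0..<d] = s1"
    using l1 l2 line_coord_line_pt[OF U U oe] by (simp add: list_eq_iff_nth_eq nth_append)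
  have m2: "map (\<lambda>j. lcoord v (?cs ! (d + j))) [0..<d] = s2"
    using l1 l2 line_coord_line_pt[OF U U oe] by (simp add: list_eq_iff_nth_eq nth_append)
  have "frame_inj_at (block_upd (v(probe := ?a)) (Suc d) ?cs)" using h a lcs unfolding frame_inj_def
    by simp
  then have "\<forall>j<d. ?cs ! j = ?cs ! (d + j)"
    using frame_inj_at_iff[OF U oe n length_frame_map lcs] c m1 m2 eq by simp
  then have "\<forall>j<d. line_pt d (v 0) (v 1) (s1 ! j) = line_pt d (v 0) (v 1) (s2 ! j)"
    using l1 l2 by (simp add: nth_append)
  then have "\<forall>j<d. s1 ! j = s2 ! j" using line_pt_inj[OF U U oe] by blast
  then show "s1 = s2" using l1 l2 by (simp add: list_eq_iff_nth_eq)
qed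

lemma inj_on_imp_frame_inj:
  assumes U: "\<And>i. length (v i) = d" and oe: "v 0 \<noteq> v 1" and n: "noncol (v 0) (v 1) (v 2)"
    and inj: "inj_on (fmap v) {s. length s = d}"
  shows "frame_inj v"
  unfolding frame_inj_def
proof (intro ballI allI impI)
  fix a :: "'a list" and cs :: "'a list list" assume a: "a \<in> Pts d" and lcs: "length cs = 2 * d
    \<and> set cs \<subseteq> Pts d"
  have la: "length a = d" using a by simp
  show "frame_inj_at (block_upd (v(probe := a)) (Suc d) cs)"
    unfolding frame_inj_at_iff[OF U oe n la conjunct1[OF lcs] conjunct2[OF lcs]]
  proof (intro impI)
    assume h: "(\<forall>j<2 * d. col (v 0) (cs ! j) (v 1)) \<and>
       a = fmap v (map (\<lambda>j. lcoord v (cs ! j)) [0..<d]) \<and>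
       a = fmap v (map (\<lambda>j. lcoord v (cs ! (d + j))) [0..<d])"
    then have "map (\<lambda>j. lcoord v (cs ! j)) [0..<d] = map (\<lambda>j. lcoord v (cs ! (d + j))) [0..<d]"
      using inj_onD[OF inj] by fastforce
    then have eqs: "\<forall>j<d. lcoord v (cs ! j) = lcoord v (cs ! (d + j))"
      by (simp add: list_eq_iff_nth_eq)
    show "\<forall>j<d. cs ! j = cs ! (d + j)"
    proof (intro allI impI)
      fix j assume j: "j < d"
      have j1: "j < 2 * d" "d + j < 2 * d" using j by auto
      have "cs ! j \<in> set cs" "cs ! (d + j) \<in> set cs" using lcs j1 by simp_all
      then have l1: "length (cs ! j) = d" "length (cs ! (d + j)) = d"
        using lcs by (simp_all add: subset_iff)
      have "cs ! j = line_pt d (v 0) (v 1) (lcoord v (cs ! j))"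
        using line_pt_line_coord[OF U U l1(1) oe] h j1 by simp
      also have "\<dots> = line_pt d (v 0) (v 1) (lcoord v (cs ! (d + j)))" using eqs j by simp
      also have "\<dots> = cs ! (d + j)"
        using line_pt_line_coord[OF U U l1(2) oe] h j1 by simp
      finally show "cs ! j = cs ! (d + j)" .
    qed
  qed
qed

lemma frame_inj_iff:
  assumes U: "\<And>i. length (v i) = d" and oe: "v 0 \<noteq> v 1" and n: "noncol (v 0) (v 1) (v 2)"
  shows "frame_inj v \<longleftrightarrow> inj_on (fmap v) {s. length s = d}"
  using frame_inj_imp_inj_on[OF U oe n] inj_on_imp_frame_inj[OF U oe n] by blast

lemma is_frame_iff:
  assumes U: "\<And>i. length (v i) = d"
  shows "is_frame v \<longleftrightarrow> v 0 \<noteq> v 1 \<and> noncol (v 0) (v 1) (v 2) \<and>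
     (\<forall>p\<in>Pts d. \<exists>s. length s = d \<and> p = fmap v s) \<and>
     inj_on (fmap v) {s. length s = d}"
  unfolding is_frame_def using frame_surj_iff[of v, OF U] frame_inj_iff[of v, OF U] by blast

text \<open>image_of_rel m \<phi> v: the m points v (Suc d + nvars m \<phi> + l), l < m, are the images under
  fmap v of a tuple of points whose coordinates, listed consecutively, satisfy the field formula
  \<phi>; the field variables of \<phi> occupy the positions Suc d, ..., Suc d + nvars m \<phi> - 1.\<close>

definition nvars :: "nat \<Rightarrow> ffm \<Rightarrow> nat" where
  "nvars m \<phi> = max (d * m) (Suc (ffm_maxvar \<phi>))"

definition image_of_rel_at :: "nat \<Rightarrow> ffm \<Rightarrow> (nat \<Rightarrow> 'a list) \<Rightarrow> bool" where
  "image_of_rel_at m \<phi> v \<longleftrightarrow> (\<forall>j<nvars m \<phi>. col (v 0) (v (Suc d + j)) (v 1)) \<and>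
     (\<forall>l<m. lincomb_pt (d * l) d v (v (Suc d + nvars m \<phi> + l))) \<and> formula_pt \<phi> v"

definition image_of_rel :: "nat \<Rightarrow> ffm \<Rightarrow> (nat \<Rightarrow> 'a list) \<Rightarrow> bool" where
  "image_of_rel m \<phi> v \<longleftrightarrow> (\<exists>cs. length cs = nvars m \<phi> \<and> set cs \<subseteq> Pts d
    \<and> image_of_rel_at m \<phi> (block_upd v (Suc d) cs))"

lemma image_of_rel_expr: "isord \<or> le_free \<phi> \<Longrightarrow> expr_J (image_of_rel m \<phi>)"
proof -
  assume lf: "isord \<or> le_free \<phi>"
  have "expr_J (image_of_rel_at m \<phi>)" unfolding image_of_rel_at_def
    by (intro expressible_conj expressible_all_less col_expr lincomb_pt_expr formula_pt_expr lf)
  then show ?thesis unfolding image_of_rel_def by (rule expressible_ex_block)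
qed

lemma image_of_rel_at_iff:
  assumes U: "\<And>i. length (v i) = d" and oe: "v 0 \<noteq> v 1" and n: "noncol (v 0) (v 1) (v 2)"
    and fd: "\<And>w. map w [0..<d * m] \<in> concat ` T \<longleftrightarrow> fsat le \<phi> w"
    and lf: "isord \<or> le_free \<phi>"
    and cs: "length cs = nvars m \<phi>" "set cs \<subseteq> Pts d"
  shows "image_of_rel_at m \<phi> (block_upd v (Suc d) cs) \<longleftrightarrow> (\<forall>j<nvars m \<phi>. col (v 0) (cs ! j) (v 1)) \<and>
      map (\<lambda>j. lcoord v (cs ! j)) [0..<d * m] \<in> concat ` T \<and>
      (\<forall>l<m. v (Suc d + nvars m \<phi> + l) = fmap v (map (\<lambda>j. lcoord v (cs ! (d * l + j))) [0..<d]))"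
proof -
  let ?N = "nvars m \<phi>"
  have N1: "d * m \<le> ?N" and N2: "ffm_maxvar \<phi> < ?N" by (auto simp: nvars_def)
  let ?w = "block_upd v (Suc d) cs"
  have Uw: "\<And>i. length (?w i) = d" using block_upd_in[of v "Pts d" cs "Suc d"] U cs by simp
  have w0: "?w 0 = v 0" "?w 1 = v 1" "?w 2 = v 2" using d2 by simp_all
  have ws: "\<And>j. j < ?N \<Longrightarrow> ?w (Suc d + j) = cs ! j" using cs by (simp add: block_upd_def)
  have wa: "\<And>l. ?w (Suc d + ?N + l) = v (Suc d + ?N + l)" using cs by (simp add: block_upd_above)
  show ?thesis
  proof (cases "\<forall>j<?N. col (v 0) (cs ! j) (v 1)")
    case False
    then have "\<not> (\<forall>j<?N. col (?w 0) (?w (Suc d + j)) (?w 1))" using ws w0 by simp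
    then show ?thesis unfolding image_of_rel_at_def using False by blast
  next
    case True
    have sl: "\<And>j. j < ?N \<Longrightarrow> col (v 0) (cs ! j) (v 1)" using True by blast
    have eA: "(\<forall>j<?N. col (?w 0) (?w (Suc d + j)) (?w 1)) = True" using ws w0 True by simp
    have eB: "(\<forall>l<m. lincomb_pt (d * l) d ?w (?w (Suc d + ?N + l))) =
       (\<forall>l<m. v (Suc d + ?N + l) = fmap v (map (\<lambda>j. lcoord v (cs ! (d * l + j))) [0..<d]))"
    proof -
      have "lincomb_pt (d * l) d ?w (?w (Suc d + ?N + l)) \<longleftrightarrow>
         v (Suc d + ?N + l) = fmap v (map (\<lambda>j. lcoord v (cs ! (d * l + j))) [0..<d])"
        if l: "l < m" for l
      proof -
        have "d * l + d \<le> d * m" using l by (metis add.commute mult_Suc_right mult_le_mono2 Suc_leI)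
        then have bl: "d * l + d \<le> length cs" using N1 cs by simp
        have "\<And>j. j < d \<Longrightarrow> d * l + j < ?N" using bl cs by simp
        then show ?thesis unfolding wa
          by (intro lincomb_pt_block_upd[OF U oe n cs(2) bl]) (use sl U in auto)
      qed
      then show ?thesis by auto
    qed
    have wofw: "\<And>j. j < ?N \<Longrightarrow> field_asg ?w j = lcoord v (cs ! j)"
      unfolding field_asg_def using ws w0 by simp
    have eC: "formula_pt \<phi> ?w \<longleftrightarrow> map (\<lambda>j. lcoord v (cs ! j)) [0..<d * m] \<in> concat ` T"
    proof -
      have "formula_pt \<phi> ?w \<longleftrightarrow> fsat le \<phi> (field_asg ?w)"
        by (rule formula_pt_iff[OF Uw]) (use w0 oe n ws sl N2 lf in auto)
      also have "\<dots> \<longleftrightarrow> map (field_asg ?w) [0..<d * m] \<in> concat ` T" using fd by simp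
      also have "map (field_asg ?w) [0..<d * m] = map (\<lambda>j. lcoord v (cs ! j)) [0..<d * m]"
        using wofw N1 by (intro map_cong) auto
      finally show ?thesis .
    qed
    show ?thesis unfolding image_of_rel_at_def eA eB eC using True by blast
  qed
qed

lemma image_of_rel_iff:
  assumes U: "\<And>i. length (v i) = d" and oe: "v 0 \<noteq> v 1" and n: "noncol (v 0) (v 1) (v 2)"
    and T: "T \<subseteq> {ys. length ys = m \<and> set ys \<subseteq> Pts d}"
    and fd: "\<And>w. map w [0..<d * m] \<in> concat ` T \<longleftrightarrow> fsat le \<phi> w"
    and lf: "isord \<or> le_free \<phi>"
  shows "image_of_rel m \<phi> v \<longleftrightarrow> (\<exists>ys\<in>T. \<forall>l<m. v (Suc d + nvars m \<phi> + l) = fmap v (ys ! l))"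
proof -
  let ?N = "nvars m \<phi>"
  have N1: "d * m \<le> ?N" and N2: "ffm_maxvar \<phi> < ?N" by (auto simp: nvars_def)
  note key = image_of_rel_at_iff[OF U oe n fd lf]
  show ?thesis
  proof
    assume "image_of_rel m \<phi> v"
    then obtain cs where cs: "length cs = ?N" "set cs \<subseteq> Pts d" "image_of_rel_at m \<phi>
      (block_upd v (Suc d) cs)"
      unfolding image_of_rel_def by blast
    then have k: "map (\<lambda>j. lcoord v (cs ! j)) [0..<d * m] \<in> concat ` T"
      "\<forall>l<m. v (Suc d + ?N + l) = fmap v (map (\<lambda>j. lcoord v (cs ! (d * l + j))) [0..<d])"
      using key[OF cs(1,2)] by simp_all
    then obtain ys where ys: "ys \<in> T" "concat ys = map (\<lambda>j. lcoord v (cs ! j)) [0..<d * m]" by auto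
    have ly0: "length ys = m" "set ys \<subseteq> Pts d" using ys(1) T by auto
    have ly: "length ys = m" "\<forall>y\<in>set ys. length y = d" using ly0 by (auto simp: subset_iff)
    have "map (\<lambda>j. lcoord v (cs ! (d * l + j))) [0..<d] = ys ! l" if "l < m" for l
      by (rule block_of_concat[OF ly(2,1) that]) (use ys(2) in simp)
    then have "\<forall>l<m. v (Suc d + ?N + l) = fmap v (ys ! l)"
      using k(2) by simp
    then show "\<exists>ys\<in>T. \<forall>l<m. v (Suc d + ?N + l) = fmap v (ys ! l)" using ys(1) by blast
  next
    assume "\<exists>ys\<in>T. \<forall>l<m. v (Suc d + ?N + l) = fmap v (ys ! l)"
    then obtain ys where ys: "ys \<in> T" "\<forall>l<m. v (Suc d + ?N + l) = fmap v (ys ! l)" by blast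
    have ly0: "length ys = m" "set ys \<subseteq> Pts d" using ys(1) T by auto
    have ly: "length ys = m" "\<forall>y\<in>set ys. length y = d" using ly0 by (auto simp: subset_iff)
    have lcat: "length (concat ys) = d * m" using length_concat_const[OF ly(2)] ly(1) by simp
    define s where "s = concat ys @ replicate (?N - d * m) 0"
    have ls: "length s = ?N" using lcat N1 by (simp add: s_def)
    define cs where "cs = map (line_pt d (v 0) (v 1)) s"
    have lcs: "length cs = ?N" "set cs \<subseteq> Pts d" using ls by (auto simp: cs_def)
    have sl: "\<forall>j<?N. col (v 0) (cs ! j) (v 1)" using ls line_pt_col[OF U U] by (simp add: cs_def)
    have lce: "\<And>j. j < ?N \<Longrightarrow> lcoord v (cs ! j) = s ! j"
      using ls line_coord_line_pt[OF U U oe] by (simp add: cs_def)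
    have sc: "\<And>j. j < d * m \<Longrightarrow> s ! j = concat ys ! j" using lcat by (simp add: s_def nth_append)
    have m1: "map (\<lambda>j. lcoord v (cs ! j)) [0..<d * m] = concat ys"
      using lce sc N1 lcat by (simp add: list_eq_iff_nth_eq)
    have m2: "map (\<lambda>j. lcoord v (cs ! (d * l + j))) [0..<d] = ys ! l" if "l < m" for l
      by (rule block_of_concat[OF ly(2,1) that]) (use lce sc N1 in simp)
    have "image_of_rel_at m \<phi> (block_upd v (Suc d) cs)"
      using key[OF lcs] sl m1 m2 ys by auto
    then show "image_of_rel m \<phi> v" unfolding image_of_rel_def using lcs by blast
  qed
qed

text \<open>A frame is compatible with the relation T of J, defined over the field by \<phi>, if a tuple
  lies in T iff it is the image under fmap v of a tuple of T; the tuple under test sits right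
  after the field variables of \<phi>.\<close>

definition compat_at :: "nat \<Rightarrow> 'a list list set \<Rightarrow> ffm \<Rightarrow> (nat \<Rightarrow> 'a list) \<Rightarrow> bool" where
  "compat_at m T \<phi> v \<longleftrightarrow> (map v [Suc d + nvars m \<phi>..<Suc d + nvars m \<phi> + m] \<in> T \<longleftrightarrow> image_of_rel m \<phi> v)"

definition frame_compat_rel :: "nat \<Rightarrow> 'a list list set \<Rightarrow> ffm \<Rightarrow> (nat \<Rightarrow> 'a list) \<Rightarrow> bool" where
  "frame_compat_rel m T \<phi> v \<longleftrightarrow> (\<forall>ys. length ys = m \<and> set ys \<subseteq> Pts d
    \<longrightarrow> compat_at m T \<phi> (block_upd v (Suc d + nvars m \<phi>) ys))"

lemma frame_compat_rel_expr:
  assumes "(m, T) \<in> Co (Pts d) J" "isord \<or> le_free \<phi>"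
  shows "expr_J (frame_compat_rel m T \<phi>)"
proof -
  have "expr_J (\<lambda>v. map v [Suc d + nvars m \<phi>..<Suc d + nvars m \<phi> + m] \<in> T)"
    by (rule Co_expressible_map[OF assms(1)]) simp
  then have "expr_J (compat_at m T \<phi>)" unfolding compat_at_def
    by (intro expressible_iff image_of_rel_expr assms(2))
  then show ?thesis unfolding frame_compat_rel_def by (rule expressible_all_block)
qed

lemma frame_compat_rel_iff:
  assumes U: "\<And>i. length (v i) = d" and oe: "v 0 \<noteq> v 1" and n: "noncol (v 0) (v 1) (v 2)"
    and T: "T \<subseteq> {ys. length ys = m \<and> set ys \<subseteq> Pts d}"
    and fd: "\<And>w. map w [0..<d * m] \<in> concat ` T \<longleftrightarrow> fsat le \<phi> w"
    and lf: "isord \<or> le_free \<phi>"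
  shows "frame_compat_rel m T \<phi> v \<longleftrightarrow> (\<forall>ys. length ys = m \<and> set ys \<subseteq> Pts d \<longrightarrow>
     (ys \<in> T \<longleftrightarrow> (\<exists>zs\<in>T. \<forall>l<m. ys ! l = fmap v (zs ! l))))"
proof -
  have "compat_at m T \<phi> (block_upd v (Suc d + nvars m \<phi>) ys) \<longleftrightarrow>
      (ys \<in> T \<longleftrightarrow> (\<exists>zs\<in>T. \<forall>l<m. ys ! l = fmap v (zs ! l)))"
    if ys: "length ys = m" "set ys \<subseteq> Pts d" for ys
  proof -
    let ?A = "Suc d + nvars m \<phi>"
    let ?w = "block_upd v ?A ys"
    have Uw: "\<And>i. length (?w i) = d" using block_upd_in[of v "Pts d" ys ?A] U ys by simp
    have w0: "?w 0 = v 0" "?w 1 = v 1" "?w 2 = v 2" using d2 by simp_all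
    have ev: "frame_pts ?w = frame_pts v" by (rule frame_pts_cong) simp
    have wa: "\<And>l. l < m \<Longrightarrow> ?w (?A + l) = ys ! l" using ys by (simp add: block_upd_def)
    have mw: "map ?w [?A..<?A + m] = ys"
    proof (rule nth_equalityI)
      show "length (map ?w [?A..<?A + m]) = length ys" using ys
        by (simp only: length_map length_upt)
      fix l assume "l < length (map ?w [?A..<?A + m])"
      then have l: "l < m" by (simp only: length_map length_upt)
      have "map ?w [?A..<?A + m] ! l = ?w (?A + l)" using l by (simp del: upt_Suc add: nth_map_upt)
      also have "\<dots> = ys ! l" by (rule wa[OF l])
      finally show "map ?w [?A..<?A + m] ! l = ys ! l" .
    qed
    have "image_of_rel m \<phi> ?w \<longleftrightarrow> (\<exists>zs\<in>T. \<forall>l<m. ?w (?A + l) = fmap ?w (zs ! l))"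
      by (rule image_of_rel_iff[OF Uw _ _ T fd lf]) (use w0 oe n in auto)
    also have "\<dots> \<longleftrightarrow> (\<exists>zs\<in>T. \<forall>l<m. ys ! l = fmap v (zs ! l))"
      using wa w0 ev by auto
    finally show ?thesis unfolding compat_at_def mw by simp
  qed
  then show ?thesis unfolding frame_compat_rel_def by blast
qed

definition frame_compat :: "(nat \<Rightarrow> 'a list) \<Rightarrow> bool" where
  "frame_compat v \<longleftrightarrow> (\<forall>x\<in>set J. frame_compat_rel (fst x) (snd x)
    (def_formula isord le d (fst x) (snd x)) v)"

text \<open>rel_via_frame n \<phi> v: some compatible frame, stored at positions 0, ..., d, maps a tuple of
  the relation defined by \<phi> onto the tuple at positions Suc d + nvars n \<phi> + l.\<close>

definition rel_via_frame_at :: "nat \<Rightarrow> ffm \<Rightarrow> (nat \<Rightarrow> 'a list) \<Rightarrow> bool" where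
  "rel_via_frame_at n \<phi> v \<longleftrightarrow> is_frame v \<and> frame_compat v \<and> image_of_rel n \<phi> v"

definition rel_via_frame :: "nat \<Rightarrow> ffm \<Rightarrow> (nat \<Rightarrow> 'a list) \<Rightarrow> bool" where
  "rel_via_frame n \<phi> v \<longleftrightarrow> (\<exists>fr. length fr = Suc d \<and> set fr \<subseteq> Pts d
    \<and> rel_via_frame_at n \<phi> (block_upd v 0 fr))"

lemma rel_via_frame_expr:
  assumes wfJ: "wf_geom d J" and pdJ: "\<forall>(m, T)\<in>set J. pdefinable isord le d m T"
    and lf: "isord \<or> le_free \<phi>"
  shows "expr_J (rel_via_frame n \<phi>)"
proof -
  have "expr_J (frame_compat_rel (fst x) (snd x) (def_formula isord le d (fst x) (snd x)))" if x: "x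
    \<in> set J" for x
  proof -
    obtain m T where mT: "x = (m, T)" by fastforce
    have xm: "(m, T) \<in> set J" using x mT by simp
    have h: "1 \<le> m \<and> T \<subseteq> {xs. length xs = m \<and> set xs \<subseteq> Pts d}" by (rule wf_geomD[OF wfJ xm])
    have co: "(m, T) \<in> Co (Pts d) J" by (rule rel_in_Co[OF xm conjunct1[OF h] conjunct2[OF h]])
    have "pdefinable isord le d m T" using pdJ xm by blast
    then have "isord \<or> le_free (def_formula isord le d m T)" using def_formula_spec by blast
    then show ?thesis using frame_compat_rel_expr[OF co] mT by simp
  qed
  then have "expr_J frame_compat" unfolding frame_compat_def by (rule expressible_ball_list)
  then have "expr_J (rel_via_frame_at n \<phi>)" unfolding rel_via_frame_at_def
    by (intro expressible_conj is_frame_expr image_of_rel_expr lf)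
  then show ?thesis unfolding rel_via_frame_def by (rule expressible_ex_block)
qed

lemma frame_compat_iff:
  assumes U: "\<And>i. length (v i) = d" and oe: "v 0 \<noteq> v 1" and n: "noncol (v 0) (v 1) (v 2)"
    and wfJ: "wf_geom d J" and pdJ: "\<forall>(m, T)\<in>set J. pdefinable isord le d m T"
  shows "frame_compat v \<longleftrightarrow> (\<forall>x\<in>set J. \<forall>ys. length ys = fst x \<and> set ys \<subseteq> Pts d \<longrightarrow>
        (ys \<in> snd x \<longleftrightarrow> (\<exists>zs\<in>snd x. \<forall>l<fst x. ys ! l = fmap v (zs ! l))))"
proof -
  have "frame_compat_rel (fst x) (snd x) (def_formula isord le d (fst x) (snd x)) v \<longleftrightarrow>
     (\<forall>ys. length ys = fst x \<and> set ys \<subseteq> Pts d \<longrightarrow>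
        (ys \<in> snd x \<longleftrightarrow> (\<exists>zs\<in>snd x. \<forall>l<fst x. ys ! l = fmap v (zs ! l))))"
    if x: "x \<in> set J" for x
  proof -
    obtain m T where mT: "x = (m, T)" by fastforce
    have xm: "(m, T) \<in> set J" using x mT by simp
    have wT: "T \<subseteq> {ys. length ys = m \<and> set ys \<subseteq> Pts d}" using wf_geomD[OF wfJ xm] by simp
    have "pdefinable isord le d m T" using pdJ xm by blast
    then have sp: "(\<not> isord \<longrightarrow> le_free (def_formula isord le d m T)) \<and>
      (\<forall>v. map v [0..<d * m] \<in> concat ` T \<longleftrightarrow> fsat le (def_formula isord le d m T) v)"
        by (rule def_formula_spec)
    have "frame_compat_rel m T (def_formula isord le d m T) v
      \<longleftrightarrow> (\<forall>ys. length ys = m \<and> set ys \<subseteq> Pts d \<longrightarrow>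
     (ys \<in> T \<longleftrightarrow> (\<exists>zs\<in>T. \<forall>l<m. ys ! l = fmap v (zs ! l))))"
    proof -
      have fd: "\<And>w. map w [0..<d * m] \<in> concat ` T \<longleftrightarrow> fsat le (def_formula isord le d m T) w"
        using sp by blast
      have lf: "isord \<or> le_free (def_formula isord le d m T)" using sp by blast
      show ?thesis by (rule frame_compat_rel_iff[OF U oe n wT fd lf])
    qed
    then show ?thesis using mT by simp
  qed
  then show ?thesis unfolding frame_compat_def by blast
qed

lemma rel_via_frame_at_iff:
  assumes wfJ: "wf_geom d J" and pdJ: "\<forall>(m, T)\<in>set J. pdefinable isord le d m T"
    and wS: "S \<subseteq> {ys. length ys = n \<and> set ys \<subseteq> Pts d}"
    and fdS: "\<And>w. map w [0..<d * n] \<in> concat ` S \<longleftrightarrow> fsat le \<phi> w" and lf: "isord \<or> le_free \<phi>"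
    and U: "\<And>i. length (v i) = d"
    and fr: "length fr = Suc d" "set fr \<subseteq> Pts d"
  shows "rel_via_frame_at n \<phi> (block_upd v 0 fr) \<longleftrightarrow>
   (block_upd v 0 fr 0 \<noteq> block_upd v 0 fr 1 \<and> noncol (block_upd v 0 fr 0) (block_upd v 0 fr 1)
     (block_upd v 0 fr 2) \<and>
   (\<forall>p\<in>Pts d. \<exists>s. length s = d \<and> p = frame_map d (block_upd v 0 fr 0) (frame_pts (block_upd v 0 fr))
     s) \<and>
   inj_on (frame_map d (block_upd v 0 fr 0) (frame_pts (block_upd v 0 fr))) {s. length s = d} \<and>
   (\<forall>x\<in>set J. \<forall>ys. length ys = fst x \<and> set ys \<subseteq> Pts d \<longrightarrow>
      (ys \<in> snd x \<longleftrightarrow> (\<exists>zs\<in>snd x. \<forall>l<fst x. ys ! l = frame_map d (block_upd v 0 fr 0)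
        (frame_pts (block_upd v 0 fr)) (zs ! l)))) \<and>
   (\<exists>ys\<in>S. \<forall>l<n. v (Suc d + nvars n \<phi> + l) = frame_map d (block_upd v 0 fr 0)
     (frame_pts (block_upd v 0 fr)) (ys ! l)))"
proof -
  let ?A = "Suc d + nvars n \<phi>"
  let ?w = "block_upd v 0 fr"
  have Uw: "\<And>i. length (?w i) = d" using block_upd_in[of v "Pts d" fr 0] U fr by simp
  have wa: "\<And>l. ?w (?A + l) = v (?A + l)" using fr by (simp add: block_upd_above)
  show ?thesis
  proof (cases "?w 0 \<noteq> ?w 1 \<and> noncol (?w 0) (?w 1) (?w 2)")
    case False
    then show ?thesis unfolding rel_via_frame_at_def using is_frame_iff[of ?w, OF Uw] by blast
  next
    case True
    then have oe: "?w 0 \<noteq> ?w 1" and n: "noncol (?w 0) (?w 1) (?w 2)" by auto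
    have I: "image_of_rel n \<phi> ?w \<longleftrightarrow> (\<exists>ys\<in>S. \<forall>l<n. ?w (?A + l) = fmap ?w (ys ! l))"
      by (rule image_of_rel_iff[OF Uw oe n wS fdS lf])
    show ?thesis unfolding rel_via_frame_at_def is_frame_iff[of ?w, OF Uw] frame_compat_iff[of ?w,
      OF Uw oe n wfJ pdJ] I wa
      by blast
  qed
qed

lemma rel_via_frame_imp_in_rel:
  assumes wfJ: "wf_geom d J" and pdJ: "\<forall>(m, T)\<in>set J. pdefinable isord le d m T"
    and wS: "S \<subseteq> {ys. length ys = n \<and> set ys \<subseteq> Pts d}"
    and fdS: "\<And>w. map w [0..<d * n] \<in> concat ` S \<longleftrightarrow> fsat le \<phi> w" and lf: "isord \<or> le_free \<phi>"
    and U: "\<And>i. length (v i) = d"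
    and SG: "(n, S) \<in> set G" and aff: "AffAut d J \<subseteq> AffAut d G"
    and "rel_via_frame n \<phi> v"
  shows "map (\<lambda>l. v (Suc d + nvars n \<phi> + l)) [0..<n] \<in> S"
proof -
  let ?A = "Suc d + nvars n \<phi>"
  note key = rel_via_frame_at_iff[where v = v, OF wfJ pdJ wS fdS lf U]
  from assms(9) obtain fr where fr: "length fr = Suc d" "set fr \<subseteq> Pts d" "rel_via_frame_at n \<phi>
    (block_upd v 0 fr)"
    unfolding rel_via_frame_def by blast
  let ?w = "block_upd v 0 fr"
  let ?al = "fmap ?w"
  have h: "(\<forall>p\<in>Pts d. \<exists>s. length s = d \<and> p = ?al s)" "inj_on ?al {s. length s = d}"
    "\<forall>x\<in>set J. \<forall>ys. length ys = fst x \<and> set ys \<subseteq> Pts d \<longrightarrow>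
      (ys \<in> snd x \<longleftrightarrow> (\<exists>zs\<in>snd x. \<forall>l<fst x. ys ! l = ?al (zs ! l)))"
    "\<exists>ys\<in>S. \<forall>l<n. v (?A + l) = ?al (ys ! l)"
    using key[OF fr(1,2)] fr(3) by blast+
  have l0: "length (?w 0) = d" using block_upd_in[of v "Pts d" fr 0] U fr by simp
  have "frame_ext d (?w 0) (frame_pts ?w) \<in> AffAut d J"
    by (rule frame_ext_AffAut[OF l0 h(1,2) wfJ h(3)])
  then have "frame_ext d (?w 0) (frame_pts ?w) \<in> Aut (Pts d) G"
    using aff unfolding AffAut_def by blast
  then have pres: "\<forall>xs. length xs = n \<and> set xs \<subseteq> Pts d \<longrightarrow>
     (map (frame_ext d (?w 0) (frame_pts ?w)) xs \<in> S \<longleftrightarrow> xs \<in> S)"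
    using SG unfolding Aut_def by fastforce
  obtain ys where ys: "ys \<in> S" "\<forall>l<n. v (?A + l) = ?al (ys ! l)" using h(4) by blast
  have ly: "length ys = n" "set ys \<subseteq> Pts d" using ys(1) wS by auto
  have eqm: "map (frame_ext d (?w 0) (frame_pts ?w)) ys = map (\<lambda>l. v (?A + l)) [0..<n]"
  proof (rule nth_equalityI)
    show "length (map (frame_ext d (?w 0) (frame_pts ?w)) ys)
      = length (map (\<lambda>l. v (?A + l)) [0..<n])"
      using ly by simp
    fix l assume "l < length (map (frame_ext d (?w 0) (frame_pts ?w)) ys)"
    then have l: "l < n" using ly by simp
    have "length (ys ! l) = d" using ly l by (auto simp: subset_iff)
    then show "map (frame_ext d (?w 0) (frame_pts ?w)) ys ! l = map (\<lambda>l. v (?A + l)) [0..<n] ! l"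
      using ys(2) l ly by (simp add: frame_ext_def)
  qed
  have "map (frame_ext d (?w 0) (frame_pts ?w)) ys \<in> S"
    using pres[rule_format, OF conjI[OF ly(1) ly(2)]] ys(1) by simp
  then show "map (\<lambda>l. v (?A + l)) [0..<n] \<in> S" unfolding eqm .
qed

lemma in_rel_imp_rel_via_frame:
  assumes wfJ: "wf_geom d J" and pdJ: "\<forall>(m, T)\<in>set J. pdefinable isord le d m T"
    and wS: "S \<subseteq> {ys. length ys = n \<and> set ys \<subseteq> Pts d}"
    and fdS: "\<And>w. map w [0..<d * n] \<in> concat ` S \<longleftrightarrow> fsat le \<phi> w" and lf: "isord \<or> le_free \<phi>"
    and U: "\<And>i. length (v i) = d"
    and xs: "map (\<lambda>l. v (Suc d + nvars n \<phi> + l)) [0..<n] \<in> S"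
  shows "rel_via_frame n \<phi> v"
proof -
  let ?A = "Suc d + nvars n \<phi>"
  note key = rel_via_frame_at_iff[where v = v, OF wfJ pdJ wS fdS lf U]
  define fr where "fr = replicate d (0::'a) # std_frame d"
  have fr: "length fr = Suc d" "set fr \<subseteq> Pts d" by (auto simp: fr_def std_frame_def)
  let ?w = "block_upd v 0 fr"
  have w: "?w 0 = replicate d 0" "?w 1 = std_frame d ! 0" "?w 2 = std_frame d ! 1"
    using d2 by (simp_all add: fr_def block_upd_def)
  have ew: "frame_pts ?w = std_frame d"
    using fr(1) by (simp add: frame_pts_def fr_def std_frame_def list_eq_iff_nth_eq block_upd_def)
  have al: "\<And>s. length s = d \<Longrightarrow> fmap ?w s = s"
    unfolding w(1) ew by (rule frame_map_std)
  have n: "noncol (?w 0) (?w 1) (?w 2)" unfolding w by (rule std_frame_noncol[OF d2])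
  then have oe: "?w 0 \<noteq> ?w 1" unfolding noncol_def by simp
  have s1: "\<forall>p\<in>Pts d. \<exists>s. length s = d \<and> p = fmap ?w s"
    using al by (metis Pts_iff)
  have s2: "inj_on (fmap ?w) {s. length s = d}"
    by (rule inj_onI) (simp add: al)
  note s3 = compat_if_frame_map_id[OF wfJ al]
  have s4: "\<exists>ys\<in>S. \<forall>l<n. v (?A + l) = fmap ?w (ys ! l)"
  proof (rule bexI[OF _ xs], intro allI impI)
    fix l assume l: "l < n"
    have "length (v (?A + l)) = d" using U by simp
    then show "v (?A + l) = fmap ?w (map (\<lambda>l. v (?A + l)) [0..<n] ! l)"
      using l al by simp
  qed
  have "rel_via_frame_at n \<phi> ?w" using key[OF fr] oe n s1 s2 s3 s4 by blast
  then show "rel_via_frame n \<phi> v" unfolding rel_via_frame_def using fr by blast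
qed

lemma rel_via_frame_iff:
  assumes wfJ: "wf_geom d J" and pdJ: "\<forall>(m, T)\<in>set J. pdefinable isord le d m T"
    and wS: "S \<subseteq> {ys. length ys = n \<and> set ys \<subseteq> Pts d}"
    and fdS: "\<And>w. map w [0..<d * n] \<in> concat ` S \<longleftrightarrow> fsat le \<phi> w" and lf: "isord \<or> le_free \<phi>"
    and U: "\<And>i. length (v i) = d"
    and SG: "(n, S) \<in> set G" and aff: "AffAut d J \<subseteq> AffAut d G"
  shows "rel_via_frame n \<phi> v \<longleftrightarrow> map (\<lambda>l. v (Suc d + nvars n \<phi> + l)) [0..<n] \<in> S"
  using rel_via_frame_imp_in_rel[where v = v, OF wfJ pdJ wS fdS lf U SG aff]
    in_rel_imp_rel_via_frame[where v = v, OF wfJ pdJ wS fdS lf U] by blast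

lemma rel_in_Co_if_AffAut_subset:
  assumes wfJ: "wf_geom d J" and pdJ: "\<forall>(m, T)\<in>set J. pdefinable isord le d m T"
    and wfG: "wf_geom d G" and SG: "(n, S) \<in> set G" and aff: "AffAut d J \<subseteq> AffAut d G"
    and pdS: "pdefinable isord le d n S"
  shows "(n, S) \<in> Co (Pts d) J"
proof -
  define \<phi> where "\<phi> = def_formula isord le d n S"
  have sp: "(\<not> isord \<longrightarrow> le_free \<phi>) \<and> (\<forall>v. map v [0..<d * n] \<in> concat ` S \<longleftrightarrow> fsat le \<phi> v)"
    unfolding \<phi>_def by (rule def_formula_spec[OF pdS])
  then have lf: "isord \<or> le_free \<phi>" by blast
  have fd: "\<And>w. map w [0..<d * n] \<in> concat ` S \<longleftrightarrow> fsat le \<phi> w" using sp by blast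
  have w: "1 \<le> n \<and> S \<subseteq> {xs. length xs = n \<and> set xs \<subseteq> Pts d}" by (rule wf_geomD[OF wfG SG])
  let ?A = "Suc d + nvars n \<phi>"
  have "expr_J (rel_via_frame n \<phi>)" by (rule rel_via_frame_expr[OF wfJ pdJ lf])
  then have "expr_J (\<lambda>v. rel_via_frame n \<phi> (v \<circ> (\<lambda>i. i - ?A)))" by (rule expressible_rename_vars)
  then have "expr_J (\<lambda>v. map v [0..<n] \<in> S)"
  proof (rule expressible_cong)
    fix v :: "nat \<Rightarrow> 'a list" assume U: "\<And>i. v i \<in> Pts d"
    have U': "\<And>i. length ((v \<circ> (\<lambda>i. i - ?A)) i) = d" using U by simp
    have "rel_via_frame n \<phi> (v \<circ> (\<lambda>i. i - ?A)) \<longleftrightarrow> map (\<lambda>l. (v \<circ> (\<lambda>i. i - ?A)) (?A + l)) [0..<n] \<in> S"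
      by (rule rel_via_frame_iff[OF wfJ pdJ conjunct2[OF w] fd lf U' SG aff])
    also have "map (\<lambda>l. (v \<circ> (\<lambda>i. i - ?A)) (?A + l)) [0..<n] = map v [0..<n]" by simp
    finally show "rel_via_frame n \<phi> (v \<circ> (\<lambda>i. i - ?A)) = (map v [0..<n] \<in> S)" .
  qed
  then show ?thesis by (rule Co_intro[OF conjunct1[OF w] conjunct2[OF w]])
qed

lemma Co_subset_if_AffAut_subset:
  assumes "FFD isord le d J" "FFD isord le d G" and aff: "AffAut d J \<subseteq> AffAut d G"
  shows "Co (Pts d) G \<subseteq> Co (Pts d) J"
proof (rule Co_subset_if_rels_in_Co)
  fix x assume x: "x \<in> set G"
  then obtain n S where nS: "x = (n, S)" and SG: "(n, S) \<in> set G" by (metis surj_pair)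
  have "wf_geom d J" "\<forall>(m, T)\<in>set J. pdefinable isord le d m T" "wf_geom d G"
    using assms(1,2) unfolding FFD_def coord_geom_def by auto
  moreover have "pdefinable isord le d n S" using assms(2) SG unfolding FFD_def by blast
  ultimately show "x \<in> Co (Pts d) J" unfolding nS using rel_in_Co_if_AffAut_subset SG aff by blast
qed

end

lemma coordinatizable_if_coord_geom:
  fixes le :: "'a::field \<Rightarrow> 'a \<Rightarrow> bool"
  assumes d2: "d \<ge> 2"
    and H: "(isord \<and> ordered_field_le le) \<or> (\<not> isord \<and> (\<exists>a b c :: 'a. a \<noteq> b \<and> a \<noteq> c \<and> b \<noteq> c))"
    and cg: "coord_geom isord le d G'"
  shows "coordinatizable d G' le isord"
proof -
  have c3: "(3, if isord then Bw le d else Col d) \<in> Co (Pts d) G'" using cg unfolding coord_geom_def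
    by blast
  have three: "\<exists>r1 r2 r3 :: 'a. r1 \<noteq> r2 \<and> r1 \<noteq> r3 \<and> r2 \<noteq> r3" using H ofl_three_elems by blast
  show ?thesis
  proof (cases isord)
    case True
    then have ofl: "ordered_field_le le" using H by blast
    have bw3: "(3, Bw le d) \<in> Co (Pts d) G'" using c3 True by simp
    have bw_expr: "expressible (Pts d) G' (\<lambda>v. bw le (v i) (v j) (v k))" for i j k
    proof -
      have "expressible (Pts d) G' (\<lambda>v. map v [i, j, k] \<in> Bw le d)"
        by (rule Co_expressible_map[OF bw3]) simp
      then show ?thesis by (rule expressible_cong) (simp add: Bw_iff)
    qed
    have col_expr: "expressible (Pts d) G' (\<lambda>v. col (v i) (v j) (v k))" for i j k
    proof -
      have "expressible (Pts d) G' (\<lambda>v. v k = v i \<or> bw le (v i) (v j) (v k)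
        \<or> bw le (v i) (v k) (v j) \<or> bw le (v j) (v i) (v k))"
        by (intro expressible_disj expressible_eq bw_expr)
      then show ?thesis by (rule expressible_cong) (simp add: col_iff_bw[OF ofl])
    qed
    show ?thesis by (unfold_locales) (use d2 three col_expr bw_expr ofl True in auto)
  next
    case False
    have col3: "(3, Col d) \<in> Co (Pts d) G'" using c3 False by simp
    have col_expr: "expressible (Pts d) G' (\<lambda>v. col (v i) (v j) (v k))" for i j k
    proof -
      have "expressible (Pts d) G' (\<lambda>v. map v [i, j, k] \<in> Col d)"
        by (rule Co_expressible_map[OF col3]) simp
      then show ?thesis by (rule expressible_cong) (simp add: Col_iff)
    qed
    show ?thesis by (unfold_locales) (use d2 three col_expr False in auto)
  qed
qed

theorem theorem2:
  fixes isord :: bool and le :: "'a::field \<Rightarrow> 'a \<Rightarrow> bool" and d :: nat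
    and G G' :: "(nat \<times> 'a list list set) list"
  assumes "d \<ge> 2"
    and "(isord \<and> ordered_field_le le) \<or> (\<not> isord \<and> (\<exists>a b c :: 'a. a \<noteq> b \<and> a \<noteq> c \<and> b \<noteq> c))"
    and "FFD isord le d G" and "FFD isord le d G'"
  shows "(Co (Pts d) G \<subseteq> Co (Pts d) G' \<longleftrightarrow> Aut (Pts d) G' \<subseteq> Aut (Pts d) G) \<and>
         (Co (Pts d) G \<subseteq> Co (Pts d) G' \<longleftrightarrow> AffAut d G' \<subseteq> AffAut d G)"
proof -
  interpret coordinatizable d G' le isord
    using coordinatizable_if_coord_geom assms(1,2,4) unfolding FFD_def by blast
  have "\<forall>(n, R)\<in>set G. n \<ge> 1 \<and> R \<subseteq> {xs. length xs = n \<and> set xs \<subseteq> Pts d}"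
    using assms(3) unfolding FFD_def coord_geom_def wf_geom_def by blast
  then have "Co (Pts d) G \<subseteq> Co (Pts d) G' \<Longrightarrow> Aut (Pts d) G' \<subseteq> Aut (Pts d) G"
    using Aut_subset_if_Co_subset[of "Pts d" G G' "replicate d 0"] by simp
  moreover have "AffAut d G' \<subseteq> AffAut d G \<Longrightarrow> Co (Pts d) G \<subseteq> Co (Pts d) G'"
    by (rule Co_subset_if_AffAut_subset[OF assms(4,3)])
  moreover have "Aut (Pts d) G' \<subseteq> Aut (Pts d) G \<Longrightarrow> AffAut d G' \<subseteq> AffAut d G"
    unfolding AffAut_def by blast
  ultimately show ?thesis by blast
qed

end
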